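(* Let $d\ge 3$ and let $\mathbf{u}=(u_1,\dots,u_d)$, $\rho>0$ be a smooth solution on $\mathbb{E}^d$ of the ideal barotropic equations $\partial_t \mathbf{u}+(\mathbf{u}\cdot\nabla)\mathbf{u}=-\nabla \Pi$, $\partial_t\rho+\nabla\cdot(\rho\mathbf{u})=0$ with $p=p(\rho)$, $\nabla\Pi=\nabla p/\rho$, which is a real Schur flow: $\partial_{x_k}u_j=0$ whenever $\lceil k/2\rceil>\lceil j/2\rceil$. Let $M=\lfloor\frac{d+1}{2}\rfloor$ and $\Omega_i=d\big(u_{2i-1}dx_{2i-1}+u_{2i}dx_{2i}\big)$ for $i=1,\dots,M$ (with $u_{d+1}\equiv0$ and the term $u_{d+1}dx_{d+1}$ omitted when $d$ is odd). Then any differential form obtained from $\Omega_1,\dots,\Omega_M$ by (constant-coefficient) linear sums and wedge products is also Lie-invariant (frozen-in), i.e. satisfies $(\partial_t+L_{\mathbf{u}})\Theta=0$.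
   Context: $L_{\mathbf{u}}$ denotes the Lie derivative along $\mathbf{u}$ acting on differential forms; $x_1,\dots,x_d$ are Cartesian coordinates on Euclidean space $\mathbb{E}^d$; $\lfloor\cdot\rfloor$ denotes the integer part. *)

theory Defs
  imports "HOL-Analysis.Analysis"
begin

text \<open>Euclidean space E^d is modelled as real^'n with d = CARD('n); the Cartesian
coordinate x_k (k = 1..d) of a point x is x $ idx k for a fixed bijection
idx from {1..d} onto the index type.\<close>

type_synonym 'n sfield = "real \<Rightarrow> real^'n \<Rightarrow> real"

text \<open>A time-dependent differential form (possibly of mixed degree) on E^d is given by
its coefficients: Theta t x S is the coefficient of dx_{s1} /\ ... /\ dx_{sk}, where
S = {s1 < ... < sk} is a subset of {1..d}.\<close>

type_synonym 'n tform = "real \<Rightarrow> real^'n \<Rightarrow> nat set \<Rightarrow> real"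

definition pdt :: "'n sfield \<Rightarrow> 'n sfield" where
  "pdt f t x = deriv (\<lambda>s. f s x) t"

definition pdx :: "(nat \<Rightarrow> 'n::finite) \<Rightarrow> nat \<Rightarrow> 'n sfield \<Rightarrow> 'n sfield" where
  "pdx idx k f t x =
     (if k \<in> {1..CARD('n)} then deriv (\<lambda>s. f t (x + s *\<^sub>R axis (idx k) 1)) 0 else 0)"

definition pdir :: "(nat \<Rightarrow> 'n::finite) \<Rightarrow> nat \<Rightarrow> 'n sfield \<Rightarrow> 'n sfield" where
  "pdir idx j f = (if j = 0 then pdt f else pdx idx j f)"

fun pdits :: "(nat \<Rightarrow> 'n::finite) \<Rightarrow> nat list \<Rightarrow> 'n sfield \<Rightarrow> 'n sfield" where
  "pdits idx [] f = f"
| "pdits idx (j # js) f = pdir idx j (pdits idx js f)"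

definition smooth_tx :: "(nat \<Rightarrow> 'n::finite) \<Rightarrow> real set \<Rightarrow> 'n sfield \<Rightarrow> bool" where
  "smooth_tx idx T f \<longleftrightarrow>
     (\<forall>js. set js \<subseteq> {0..CARD('n)} \<longrightarrow>
        continuous_on (T \<times> UNIV) (\<lambda>(t, x). pdits idx js f t x) \<and>
        (\<forall>t\<in>T. \<forall>x. (\<lambda>s. pdits idx js f s x) differentiable (at t)) \<and>
        (\<forall>t\<in>T. \<forall>x. \<forall>k\<in>{1..CARD('n)}.
            (\<lambda>s. pdits idx js f t (x + s *\<^sub>R axis (idx k) 1)) differentiable (at 0)))"

definition smooth_pos :: "(real \<Rightarrow> real) \<Rightarrow> bool" where
  "smooth_pos p \<longleftrightarrow> (\<forall>n. \<forall>r>0. ((deriv ^^ n) p) field_differentiable (at r))"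

text \<open>Velocity component u_j (j = 1..d); u_j = 0 otherwise (in particular u_{d+1} = 0).\<close>
definition ucomp :: "(nat \<Rightarrow> 'n::finite) \<Rightarrow> (real \<Rightarrow> real^'n \<Rightarrow> real^'n) \<Rightarrow> nat \<Rightarrow> 'n sfield" where
  "ucomp idx u j t x = (if j \<in> {1..CARD('n)} then u t x $ idx j else 0)"

text \<open>Exterior derivative:  d(f dx_I) = sum_k d_k f dx_k /\ dx_I.\<close>
definition dform :: "(nat \<Rightarrow> 'n::finite) \<Rightarrow> 'n tform \<Rightarrow> 'n tform" where
  "dform idx \<Theta> t x S =
     (\<Sum>k\<in>S. (-1) ^ card {s\<in>S. s < k} * pdx idx k (\<lambda>t' x'. \<Theta> t' x' (S - {k})) t x)"

definition iprod :: "(nat \<Rightarrow> 'n::finite) \<Rightarrow> (real \<Rightarrow> real^'n \<Rightarrow> real^'n) \<Rightarrow> 'n tform \<Rightarrow> 'n tform" where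
  "iprod idx u \<Theta> t x S =
     (\<Sum>j\<in>{1..CARD('n)} - S. (-1) ^ card {s\<in>S. s < j} * ucomp idx u j t x * \<Theta> t x (insert j S))"

text \<open>Lie derivative along u (at each fixed time), via Cartan's formula L_u = d i_u + i_u d.\<close>
definition lie :: "(nat \<Rightarrow> 'n::finite) \<Rightarrow> (real \<Rightarrow> real^'n \<Rightarrow> real^'n) \<Rightarrow> 'n tform \<Rightarrow> 'n tform" where
  "lie idx u \<Theta> t x S = dform idx (iprod idx u \<Theta>) t x S + iprod idx u (dform idx \<Theta>) t x S"

text \<open>Wedge product: dx_A /\ dx_B = (-1)^{#{(a,b) in A x B. a > b}} dx_{A Un B} for disjoint A, B.\<close>
definition wedge :: "'n tform \<Rightarrow> 'n tform \<Rightarrow> 'n tform" where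
  "wedge \<alpha> \<beta> t x S =
     (\<Sum>A\<in>Pow S. (-1) ^ card {(a, b). a \<in> A \<and> b \<in> S - A \<and> b < a} * \<alpha> t x A * \<beta> t x (S - A))"

definition alpha1 :: "(nat \<Rightarrow> 'n::finite) \<Rightarrow> (real \<Rightarrow> real^'n \<Rightarrow> real^'n) \<Rightarrow> nat \<Rightarrow> 'n tform" where
  "alpha1 idx u i t x S =
     (if S = {2*i - 1} then ucomp idx u (2*i - 1) t x
      else if S = {2*i} then ucomp idx u (2*i) t x else 0)"

definition Omega :: "(nat \<Rightarrow> 'n::finite) \<Rightarrow> (real \<Rightarrow> real^'n \<Rightarrow> real^'n) \<Rightarrow> nat \<Rightarrow> 'n tform" where
  "Omega idx u i = dform idx (alpha1 idx u i)"

inductive_set gen_forms :: "(nat \<Rightarrow> 'n::finite) \<Rightarrow> (real \<Rightarrow> real^'n \<Rightarrow> real^'n) \<Rightarrow> nat \<Rightarrow> 'n tform set"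
  for idx u M where
  base: "i \<in> {1..M} \<Longrightarrow> Omega idx u i \<in> gen_forms idx u M"
| scale: "\<Theta> \<in> gen_forms idx u M \<Longrightarrow> (\<lambda>t x S. c * \<Theta> t x S) \<in> gen_forms idx u M"
| add: "\<Theta>1 \<in> gen_forms idx u M \<Longrightarrow> \<Theta>2 \<in> gen_forms idx u M \<Longrightarrow>
         (\<lambda>t x S. \<Theta>1 t x S + \<Theta>2 t x S) \<in> gen_forms idx u M"
| wedge: "\<Theta>1 \<in> gen_forms idx u M \<Longrightarrow> \<Theta>2 \<in> gen_forms idx u M \<Longrightarrow>
         wedge \<Theta>1 \<Theta>2 \<in> gen_forms idx u M"

definition lie_invariant :: "(nat \<Rightarrow> 'n::finite) \<Rightarrow> real set \<Rightarrow> (real \<Rightarrow> real^'n \<Rightarrow> real^'n) \<Rightarrow> 'n tform \<Rightarrow> bool" where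
  "lie_invariant idx T u \<Theta> \<longleftrightarrow>
     (\<forall>t\<in>T. \<forall>x. \<forall>S. S \<subseteq> {1..CARD('n)} \<longrightarrow>
        pdt (\<lambda>t' x'. \<Theta> t' x' S) t x + lie idx u \<Theta> t x S = 0)"

end

theory Submission
  imports Defs
begin

(* Write alpha_i = u_(2i-1) dx_(2i-1) + u_(2i) dx_(2i), so that Omega_i = d alpha_i. The operator
   d/dt + L_u, with L_u = d i_u + i_u d, is linear and obeys the Leibniz rule for the wedge product,
   because d and i_u are graded derivations; so it suffices that each Omega_i is frozen in.
   As Omega_i is closed, (d/dt + L_u) Omega_i = d (d/dt alpha_i + i_u Omega_i). By the momentum
   equation the dx_l-coefficient of d/dt alpha_i + i_u Omega_i is
   - [l in B_i] d_l p(rho) / rho - sum over j in B_i of u_j d_l u_j,  where B_i = {2i-1, 2i}.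
   The sum is a gradient, and so is the pressure term d_l p(rho) / rho = d_l h(rho) (h the enthalpy);
   what survives in the curl are the derivatives d_k (d_l p(rho) / rho) with k and l in different
   blocks, and these vanish because by the Schur condition d_l p(rho) / rho = -(d/dt + u.grad) u_l
   does not depend on the coordinates of later blocks. *)

section \<open>Partial derivatives\<close>

definition has_pdx :: "(nat \<Rightarrow> 'n::finite) \<Rightarrow> nat \<Rightarrow> 'n sfield \<Rightarrow> real \<Rightarrow> real^'n \<Rightarrow> bool" where
  "has_pdx idx k f t x \<longleftrightarrow>
     (k \<in> {1..CARD('n)} \<longrightarrow> (\<lambda>s. f t (x + s *\<^sub>R axis (idx k) 1)) field_differentiable at 0)"

definition has_pdt :: "'n sfield \<Rightarrow> real \<Rightarrow> real^'n \<Rightarrow> bool" where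
  "has_pdt f t x \<longleftrightarrow> (\<lambda>s. f s x) field_differentiable at t"

lemma real_differentiable_iff_field_differentiable:
  "(f :: real \<Rightarrow> real) differentiable at x \<longleftrightarrow> f field_differentiable at x"
  by (metis DERIV_deriv_iff_field_differentiable DERIV_deriv_iff_real_differentiable)

context fixes idx :: "nat \<Rightarrow> 'n::finite"
begin

lemma pdx_out: "k \<notin> {1..CARD('n)} \<Longrightarrow> pdx idx k f t x = 0"
  unfolding pdx_def by (simp only: if_False)

lemma pdx_cong: "(\<And>y. f t y = g t y) \<Longrightarrow> pdx idx k f t x = pdx idx k g t x"
  by (simp add: pdx_def)

lemma has_pdx_cong: "(\<And>y. f t y = g t y) \<Longrightarrow> has_pdx idx k f t x \<longleftrightarrow> has_pdx idx k g t x"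
  by (simp add: has_pdx_def)

lemma pdx_zero: "(\<And>y. f t y = 0) \<Longrightarrow> pdx idx k f t x = 0"
  by (simp add: pdx_def)

lemma has_pdx_const [simp]: "has_pdx idx k (\<lambda>t x. c) t x"
  by (simp add: has_pdx_def)

lemma pdx_const [simp]: "pdx idx k (\<lambda>t x. c) t x = 0"
  by (simp add: pdx_def)

lemma has_pdx_add [simp]:
  "has_pdx idx k f t x \<Longrightarrow> has_pdx idx k g t x \<Longrightarrow> has_pdx idx k (\<lambda>t x. f t x + g t x) t x"
  by (simp add: has_pdx_def field_differentiable_add)

lemma has_pdx_diff [simp]:
  "has_pdx idx k f t x \<Longrightarrow> has_pdx idx k g t x \<Longrightarrow> has_pdx idx k (\<lambda>t x. f t x - g t x) t x"
  by (simp add: has_pdx_def field_differentiable_diff)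

lemma has_pdx_uminus [simp]:
  "has_pdx idx k f t x \<Longrightarrow> has_pdx idx k (\<lambda>t x. - f t x) t x"
  by (simp add: has_pdx_def field_differentiable_minus)

lemma has_pdx_mult [simp]:
  "has_pdx idx k f t x \<Longrightarrow> has_pdx idx k g t x \<Longrightarrow> has_pdx idx k (\<lambda>t x. f t x * g t x) t x"
  by (simp add: has_pdx_def field_differentiable_mult)

lemma has_pdx_sum [simp]:
  "(\<And>i. i \<in> I \<Longrightarrow> has_pdx idx k (f i) t x) \<Longrightarrow> has_pdx idx k (\<lambda>t x. \<Sum>i\<in>I. f i t x) t x"
  by (auto simp: has_pdx_def intro!: field_differentiable_sum)

lemma pdx_add [simp]:
  "has_pdx idx k f t x \<Longrightarrow> has_pdx idx k g t x \<Longrightarrow>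
   pdx idx k (\<lambda>t x. f t x + g t x) t x = pdx idx k f t x + pdx idx k g t x"
  by (simp add: has_pdx_def pdx_def)

lemma pdx_diff [simp]:
  "has_pdx idx k f t x \<Longrightarrow> has_pdx idx k g t x \<Longrightarrow>
   pdx idx k (\<lambda>t x. f t x - g t x) t x = pdx idx k f t x - pdx idx k g t x"
  by (simp add: has_pdx_def pdx_def)

lemma pdx_uminus [simp]:
  "has_pdx idx k f t x \<Longrightarrow> pdx idx k (\<lambda>t x. - f t x) t x = - pdx idx k f t x"
  by (simp add: has_pdx_def pdx_def)

lemma pdx_mult [simp]:
  "has_pdx idx k f t x \<Longrightarrow> has_pdx idx k g t x \<Longrightarrow>
   pdx idx k (\<lambda>t x. f t x * g t x) t x = pdx idx k f t x * g t x + f t x * pdx idx k g t x"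
  by (simp add: has_pdx_def pdx_def)

lemma pdx_sum [simp]:
  "(\<And>i. i \<in> I \<Longrightarrow> has_pdx idx k (f i) t x) \<Longrightarrow>
   pdx idx k (\<lambda>t x. \<Sum>i\<in>I. f i t x) t x = (\<Sum>i\<in>I. pdx idx k (f i) t x)"
  by (auto simp: has_pdx_def pdx_def intro!: DERIV_imp_deriv DERIV_sum
           simp flip: DERIV_deriv_iff_field_differentiable)

lemma pdx_chain:
  assumes "F field_differentiable at (f t x)" "has_pdx idx k f t x"
  shows "pdx idx k (\<lambda>t x. F (f t x)) t x = deriv F (f t x) * pdx idx k f t x"
    and "has_pdx idx k (\<lambda>t x. F (f t x)) t x"
  using assms deriv_chain[of "\<lambda>s. f t (x + s *\<^sub>R axis (idx k) 1)" 0 F]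
    field_differentiable_compose[of "\<lambda>s. f t (x + s *\<^sub>R axis (idx k) 1)" 0 F]
  by (auto simp: has_pdx_def pdx_def o_def)

end

lemma pdt_cong:
  assumes "open T" "t \<in> T" "\<And>s. s \<in> T \<Longrightarrow> f s x = g s x"
  shows "pdt f t x = pdt g t x"
proof -
  have "eventually (\<lambda>s. f s x = g s x) (nhds t)"
    using assms eventually_nhds by blast
  thus ?thesis unfolding pdt_def by (intro deriv_cong_ev) auto
qed

lemma pdt_const [simp]: "pdt (\<lambda>t x. c) t x = 0"
  by (simp add: pdt_def)

lemma has_pdt_const [simp]: "has_pdt (\<lambda>t x. c) t x"
  by (simp add: has_pdt_def)

lemma has_pdt_add [simp]:
  "has_pdt f t x \<Longrightarrow> has_pdt g t x \<Longrightarrow> has_pdt (\<lambda>t x. f t x + g t x) t x"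
  by (simp add: has_pdt_def field_differentiable_add)

lemma has_pdt_diff [simp]:
  "has_pdt f t x \<Longrightarrow> has_pdt g t x \<Longrightarrow> has_pdt (\<lambda>t x. f t x - g t x) t x"
  by (simp add: has_pdt_def field_differentiable_diff)

lemma has_pdt_mult [simp]:
  "has_pdt f t x \<Longrightarrow> has_pdt g t x \<Longrightarrow> has_pdt (\<lambda>t x. f t x * g t x) t x"
  by (simp add: has_pdt_def field_differentiable_mult)

lemma has_pdt_sum [simp]:
  "(\<And>i. i \<in> I \<Longrightarrow> has_pdt (f i) t x) \<Longrightarrow> has_pdt (\<lambda>t x. \<Sum>i\<in>I. f i t x) t x"
  by (auto simp: has_pdt_def intro!: field_differentiable_sum)

lemma pdt_add [simp]:
  "has_pdt f t x \<Longrightarrow> has_pdt g t x \<Longrightarrow> pdt (\<lambda>t x. f t x + g t x) t x = pdt f t x + pdt g t x"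
  by (simp add: has_pdt_def pdt_def)

lemma pdt_diff [simp]:
  "has_pdt f t x \<Longrightarrow> has_pdt g t x \<Longrightarrow> pdt (\<lambda>t x. f t x - g t x) t x = pdt f t x - pdt g t x"
  by (simp add: has_pdt_def pdt_def)

lemma pdt_mult [simp]:
  "has_pdt f t x \<Longrightarrow> has_pdt g t x \<Longrightarrow>
   pdt (\<lambda>t x. f t x * g t x) t x = pdt f t x * g t x + f t x * pdt g t x"
  by (simp add: has_pdt_def pdt_def)

lemma pdt_sum [simp]:
  "(\<And>i. i \<in> I \<Longrightarrow> has_pdt (f i) t x) \<Longrightarrow>
   pdt (\<lambda>t x. \<Sum>i\<in>I. f i t x) t x = (\<Sum>i\<in>I. pdt (f i) t x)"
  by (auto simp: has_pdt_def pdt_def intro!: DERIV_imp_deriv DERIV_sum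
           simp flip: DERIV_deriv_iff_field_differentiable)

section \<open>Mixed partial derivatives of smooth functions\<close>

lemma second_difference_mvt:
  fixes g ga gb gab gba :: "real \<Rightarrow> real \<Rightarrow> real"
  assumes h: "0 < h"
    and ga: "\<And>a b. a \<in> {0..h} \<Longrightarrow> b \<in> {0..h} \<Longrightarrow> ((\<lambda>s. g s b) has_real_derivative ga a b) (at a)"
    and gb: "\<And>a b. a \<in> {0..h} \<Longrightarrow> b \<in> {0..h} \<Longrightarrow> ((\<lambda>s. g a s) has_real_derivative gb a b) (at b)"
    and gab: "\<And>a b. a \<in> {0..h} \<Longrightarrow> b \<in> {0..h} \<Longrightarrow> ((\<lambda>s. ga a s) has_real_derivative gab a b) (at b)"
    and gba: "\<And>a b. a \<in> {0..h} \<Longrightarrow> b \<in> {0..h} \<Longrightarrow> ((\<lambda>s. gb s b) has_real_derivative gba a b) (at a)"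
  obtains a b a' b' where "a \<in> {0<..<h}" "b \<in> {0<..<h}" "a' \<in> {0<..<h}" "b' \<in> {0<..<h}"
    and "gab a b = gba a' b'"
proof -
  \<comment> \<open>Both mixed partials equal the second difference g h h - g h 0 - g 0 h + g 0 0 divided by h * h.\<close>
  have "\<And>s. s \<in> {0..h} \<Longrightarrow> ((\<lambda>s. g s h - g s 0) has_real_derivative ga s h - ga s 0) (at s)"
    using h by (intro derivative_intros ga) auto
  then obtain a where a: "a \<in> {0<..<h}" and ea: "g h h - g h 0 - (g 0 h - g 0 0) = h * (ga a h - ga a 0)"
    using MVT2[of 0 h "\<lambda>s. g s h - g s 0" "\<lambda>s. ga s h - ga s 0"] h by auto
  obtain b where b: "b \<in> {0<..<h}" and eb: "ga a h - ga a 0 = h * gab a b"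
    using MVT2[of 0 h "ga a" "gab a"] h a gab[of a] by auto
  have "\<And>s. s \<in> {0..h} \<Longrightarrow> ((\<lambda>s. g h s - g 0 s) has_real_derivative gb h s - gb 0 s) (at s)"
    using h by (intro derivative_intros gb) auto
  then obtain b' where b': "b' \<in> {0<..<h}" and eb': "g h h - g 0 h - (g h 0 - g 0 0) = h * (gb h b' - gb 0 b')"
    using MVT2[of 0 h "\<lambda>s. g h s - g 0 s" "\<lambda>s. gb h s - gb 0 s"] h by auto
  obtain a' where a': "a' \<in> {0<..<h}" and ea': "gb h b' - gb 0 b' = h * gba a' b'"
    using MVT2[of 0 h "\<lambda>s. gb s b'" "\<lambda>s. gba s b'"] h b' gba[of _ b'] by auto
  have "h * h * gab a b = h * h * gba a' b'"
    using ea eb eb' ea' by (simp add: algebra_simps)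
  with h a b a' b' that show ?thesis by simp
qed

lemma mixed_partials_eq:
  fixes g ga gb gab gba :: "real \<Rightarrow> real \<Rightarrow> real"
  assumes e: "e > 0"
    and ga: "\<And>a b. \<bar>a\<bar> < e \<Longrightarrow> \<bar>b\<bar> < e \<Longrightarrow> ((\<lambda>s. g s b) has_real_derivative ga a b) (at a)"
    and gb: "\<And>a b. \<bar>a\<bar> < e \<Longrightarrow> \<bar>b\<bar> < e \<Longrightarrow> ((\<lambda>s. g a s) has_real_derivative gb a b) (at b)"
    and gab: "\<And>a b. \<bar>a\<bar> < e \<Longrightarrow> \<bar>b\<bar> < e \<Longrightarrow> ((\<lambda>s. ga a s) has_real_derivative gab a b) (at b)"
    and gba: "\<And>a b. \<bar>a\<bar> < e \<Longrightarrow> \<bar>b\<bar> < e \<Longrightarrow> ((\<lambda>s. gb s b) has_real_derivative gba a b) (at a)"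
    and cont_ab: "continuous (at (0, 0)) (\<lambda>z. gab (fst z) (snd z))"
    and cont_ba: "continuous (at (0, 0)) (\<lambda>z. gba (fst z) (snd z))"
  shows "gab 0 0 = gba 0 0"
proof (rule ccontr)
  assume ne: "gab 0 0 \<noteq> gba 0 0"
  define \<epsilon> where "\<epsilon> = \<bar>gab 0 0 - gba 0 0\<bar> / 2"
  have \<epsilon>: "\<epsilon> > 0" using ne by (simp add: \<epsilon>_def)
  obtain \<delta>1 where \<delta>1: "\<delta>1 > 0" "\<And>z. dist z (0, 0) < \<delta>1 \<Longrightarrow> \<bar>gab (fst z) (snd z) - gab 0 0\<bar> < \<epsilon>"
    using cont_ab \<epsilon> unfolding continuous_at_eps_delta dist_real_def by fastforce
  obtain \<delta>2 where \<delta>2: "\<delta>2 > 0" "\<And>z. dist z (0, 0) < \<delta>2 \<Longrightarrow> \<bar>gba (fst z) (snd z) - gba 0 0\<bar> < \<epsilon>"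
    using cont_ba \<epsilon> unfolding continuous_at_eps_delta dist_real_def by fastforce
  define h where "h = min e (min \<delta>1 \<delta>2) / 3"
  have h: "0 < h" "h < e" "2 * h < \<delta>1" "2 * h < \<delta>2" using e \<delta>1 \<delta>2 by (auto simp: h_def)
  have box: "\<bar>a\<bar> < e" if "a \<in> {0..h}" for a using that h by auto
  obtain a b a' b' where ab: "a \<in> {0<..<h}" "b \<in> {0<..<h}" "a' \<in> {0<..<h}" "b' \<in> {0<..<h}"
    and eq: "gab a b = gba a' b'"
    by (rule second_difference_mvt[OF h(1), of g ga gb gab gba]) (blast intro: ga gb gab gba box)+
  have "dist (a, b) (0, 0) < \<delta>1" "dist (a', b') (0, 0) < \<delta>2"
    using norm_Pair_le[of a b] norm_Pair_le[of a' b'] ab h by (auto simp: dist_norm)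
  then have "\<bar>gab a b - gab 0 0\<bar> < \<epsilon>" "\<bar>gba a' b' - gba 0 0\<bar> < \<epsilon>"
    using \<delta>1(2) \<delta>2(2) by force+
  with eq show False unfolding \<epsilon>_def by (simp add: abs_if split: if_splits)
qed

context fixes idx :: "nat \<Rightarrow> 'n::finite"
begin

lemma pdits_append: "pdits idx (js @ ks) f = pdits idx js (pdits idx ks f)"
  by (induction js) auto

lemma pdits_zero: "pdits idx js (\<lambda>t x. 0) = (\<lambda>t x. 0)"
  by (induction js) (auto simp: pdir_def intro!: ext)

lemma smooth_tx_zero: "smooth_tx idx T (\<lambda>t x. 0)"
  by (simp add: smooth_tx_def pdits_zero)

lemma smooth_tx_pdx:
  assumes "smooth_tx idx T f"
  shows "smooth_tx idx T (pdx idx k f)"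
proof (cases "k \<in> {1..CARD('n)}")
  case True
  then have "pdits idx js (pdx idx k f) = pdits idx (js @ [k]) f" for js
    by (simp add: pdits_append pdir_def)
  with assms True show ?thesis
    unfolding smooth_tx_def by auto
next
  case False
  then have "pdx idx k f = (\<lambda>t x. 0)"
    by (intro ext pdx_out)
  then show ?thesis by (simp add: smooth_tx_zero)
qed

lemma smooth_tx_pdt:
  assumes "smooth_tx idx T f"
  shows "smooth_tx idx T (pdt f)"
proof -
  have "pdits idx js (pdt f) = pdits idx (js @ [0]) f" for js
    by (simp add: pdits_append pdir_def)
  with assms show ?thesis
    unfolding smooth_tx_def by auto
qed

lemma smooth_tx_has_pdx: "smooth_tx idx T f \<Longrightarrow> t \<in> T \<Longrightarrow> has_pdx idx k f t x"
  unfolding smooth_tx_def has_pdx_def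
  by (drule spec[of _ "[]"]) (simp add: real_differentiable_iff_field_differentiable)

lemma smooth_tx_has_pdt: "smooth_tx idx T f \<Longrightarrow> t \<in> T \<Longrightarrow> has_pdt f t x"
  unfolding smooth_tx_def has_pdt_def
  by (drule spec[of _ "[]"]) (simp add: real_differentiable_iff_field_differentiable)

lemma smooth_tx_continuous_compose:
  fixes \<phi> :: "'a::t2_space \<Rightarrow> real \<times> (real^'n)"
  assumes "smooth_tx idx T f" "open T" "continuous (at z) \<phi>" "fst (\<phi> z) \<in> T"
  shows "continuous (at z) (\<lambda>z. f (fst (\<phi> z)) (snd (\<phi> z)))"
proof -
  have "continuous_on (T \<times> UNIV) (\<lambda>(t, x). f t x)"
    using spec[OF assms(1)[unfolded smooth_tx_def], of "[]"] by simp
  then have "continuous (at (\<phi> z)) (\<lambda>(t, x). f t x)"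
    using assms(2,4) by (cases "\<phi> z") (auto simp: continuous_on_eq_continuous_at open_Times)
  then show ?thesis
    using continuous_at_compose[OF assms(3)] by (simp add: o_def case_prod_unfold)
qed

lemma pdx_has_derivative_along:
  assumes "has_pdx idx k f t (y + a *\<^sub>R axis (idx k) 1)" "k \<in> {1..CARD('n)}"
  shows "((\<lambda>s. f t (y + s *\<^sub>R axis (idx k) 1)) has_real_derivative
           pdx idx k f t (y + a *\<^sub>R axis (idx k) 1)) (at a)"
  using assms DERIV_shift[of "\<lambda>s. f t (y + s *\<^sub>R axis (idx k) 1)" _ 0 a]
  by (simp add: has_pdx_def pdx_def algebra_simps scaleR_add_left
      flip: DERIV_deriv_iff_field_differentiable)

lemma pdt_has_derivative_along:
  assumes "has_pdt f (t + a) y"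
  shows "((\<lambda>s. f (t + s) y) has_real_derivative pdt f (t + a) y) (at a)"
  using assms DERIV_shift[of "\<lambda>s. f s y" _ a t]
  by (simp add: has_pdt_def pdt_def add.commute flip: DERIV_deriv_iff_field_differentiable)

lemma pdx_commute:
  assumes f: "smooth_tx idx T f" and T: "open T" "t \<in> T"
  shows "pdx idx k (pdx idx l f) t x = pdx idx l (pdx idx k f) t x"
proof (cases "k \<in> {1..CARD('n)} \<and> l \<in> {1..CARD('n)}")
  case False
  then have "pdx idx k (pdx idx l f) t x = 0" "pdx idx l (pdx idx k f) t x = 0"
    by (auto simp: pdx_out intro: pdx_zero)
  then show ?thesis by simp
next
  case True
  define ek el where "ek = axis (idx k) (1::real)" and "el = axis (idx l) (1::real)"
  let ?P = "\<lambda>a b. x + a *\<^sub>R ek + b *\<^sub>R el"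
  have smooth: "smooth_tx idx T (pdx idx k f)" "smooth_tx idx T (pdx idx l f)"
    "smooth_tx idx T (pdx idx l (pdx idx k f))" "smooth_tx idx T (pdx idx k (pdx idx l f))"
    using f by (simp_all add: smooth_tx_pdx)
  have along_k: "((\<lambda>s. g t (?P s b)) has_real_derivative pdx idx k g t (?P a b)) (at a)"
    if "smooth_tx idx T g" for g a b
    using pdx_has_derivative_along[OF smooth_tx_has_pdx[OF that T(2)], of k "x + b *\<^sub>R el" a] True
    by (simp add: ek_def add_ac)
  have along_l: "((\<lambda>s. g t (?P a s)) has_real_derivative pdx idx l g t (?P a b)) (at b)"
    if "smooth_tx idx T g" for g a b
    using pdx_has_derivative_along[OF smooth_tx_has_pdx[OF that T(2)], of l "x + a *\<^sub>R ek" b] True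
    by (simp add: el_def add_ac)
  have cont: "continuous (at (0, 0)) (\<lambda>z. g t (?P (fst z) (snd z)))"
    if "smooth_tx idx T g" for g
    using smooth_tx_continuous_compose[OF that T(1), where \<phi>="\<lambda>z. (t, ?P (fst z) (snd z))" and z="(0, 0)"] T(2)
    by (simp add: continuous_intros)
  have "pdx idx l (pdx idx k f) t (?P 0 0) = pdx idx k (pdx idx l f) t (?P 0 0)"
    by (rule mixed_partials_eq[where e=1 and g="\<lambda>a b. f t (?P a b)"
          and ga="\<lambda>a b. pdx idx k f t (?P a b)" and gb="\<lambda>a b. pdx idx l f t (?P a b)"
          and gab="\<lambda>a b. pdx idx l (pdx idx k f) t (?P a b)"
          and gba="\<lambda>a b. pdx idx k (pdx idx l f) t (?P a b)"])
       (simp_all add: along_k along_l cont f smooth)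
  then show ?thesis by simp
qed

lemma pdt_pdx_commute:
  assumes f: "smooth_tx idx T f" and T: "open T" "t \<in> T"
  shows "pdt (pdx idx k f) t x = pdx idx k (pdt f) t x"
proof (cases "k \<in> {1..CARD('n)}")
  case False
  then have "pdx idx k f = (\<lambda>t x. 0)" by (intro ext pdx_out)
  with False show ?thesis by (simp add: pdx_out)
next
  case True
  obtain e where e: "e > 0" "ball t e \<subseteq> T" using T openE by blast
  have shifted: "t + a \<in> T" if "\<bar>a\<bar> < e" for a
    using e that by (intro subsetD[OF e(2)]) (simp add: dist_real_def)
  define ek where "ek = axis (idx k) (1::real)"
  let ?P = "\<lambda>b. x + b *\<^sub>R ek"
  have smooth: "smooth_tx idx T (pdx idx k f)" "smooth_tx idx T (pdt f)"
    "smooth_tx idx T (pdx idx k (pdt f))" "smooth_tx idx T (pdt (pdx idx k f))"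
    using f by (simp_all add: smooth_tx_pdx smooth_tx_pdt)
  have along_t: "((\<lambda>s. g (t + s) (?P b)) has_real_derivative pdt g (t + a) (?P b)) (at a)"
    if "smooth_tx idx T g" "\<bar>a\<bar> < e" for g a b
    using pdt_has_derivative_along[OF smooth_tx_has_pdt[OF that(1) shifted[OF that(2)]]] .
  have along_k: "((\<lambda>s. g (t + a) (?P s)) has_real_derivative pdx idx k g (t + a) (?P b)) (at b)"
    if "smooth_tx idx T g" "\<bar>a\<bar> < e" for g a b
    using pdx_has_derivative_along[OF smooth_tx_has_pdx[OF that(1) shifted[OF that(2)]], of k x b] True
    by (simp add: ek_def)
  have cont: "continuous (at (0, 0)) (\<lambda>z. g (t + fst z) (?P (snd z)))"
    if "smooth_tx idx T g" for g
    using smooth_tx_continuous_compose[OF that T(1), where \<phi>="\<lambda>z. (t + fst z, ?P (snd z))" and z="(0, 0)"] T(2)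
    by (simp add: continuous_intros)
  have "pdx idx k (pdt f) (t + 0) (?P 0) = pdt (pdx idx k f) (t + 0) (?P 0)"
    by (rule mixed_partials_eq[where e=e and g="\<lambda>a b. f (t + a) (?P b)"
          and ga="\<lambda>a b. pdt f (t + a) (?P b)" and gb="\<lambda>a b. pdx idx k f (t + a) (?P b)"
          and gab="\<lambda>a b. pdx idx k (pdt f) (t + a) (?P b)"
          and gba="\<lambda>a b. pdt (pdx idx k f) (t + a) (?P b)"])
       (simp_all add: along_t along_k cont f smooth e)
  then show ?thesis by simp
qed

end

section \<open>Exterior algebra of coefficient functions\<close>

definition inv_sign :: "nat set \<Rightarrow> nat set \<Rightarrow> real" where
  "inv_sign A B = (-1) ^ card {(a, b). a \<in> A \<and> b \<in> B \<and> b < a}"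

lemma finite_inversions: "finite A \<Longrightarrow> finite B \<Longrightarrow> finite {(a, b). a \<in> A \<and> b \<in> B \<and> b < a}"
  by (rule finite_subset[of _ "A \<times> B"]) auto

lemma inv_sign_Un_left:
  assumes "finite A" "finite B" "finite C" "A \<inter> B = {}"
  shows "inv_sign (A \<union> B) C = inv_sign A C * inv_sign B C"
proof -
  have "{(a, b). a \<in> A \<union> B \<and> b \<in> C \<and> b < a} =
        {(a, b). a \<in> A \<and> b \<in> C \<and> b < a} \<union> {(a, b). a \<in> B \<and> b \<in> C \<and> b < a}" by auto
  moreover have "card \<dots> = card {(a, b). a \<in> A \<and> b \<in> C \<and> b < a} + card {(a, b). a \<in> B \<and> b \<in> C \<and> b < a}"
    using assms by (intro card_Un_disjoint finite_inversions) auto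
  ultimately show ?thesis
    unfolding inv_sign_def by (simp add: power_add)
qed

lemma inv_sign_Un_right:
  assumes "finite A" "finite B" "finite C" "B \<inter> C = {}"
  shows "inv_sign A (B \<union> C) = inv_sign A B * inv_sign A C"
proof -
  have "{(a, b). a \<in> A \<and> b \<in> B \<union> C \<and> b < a} =
        {(a, b). a \<in> A \<and> b \<in> B \<and> b < a} \<union> {(a, b). a \<in> A \<and> b \<in> C \<and> b < a}" by auto
  moreover have "card \<dots> = card {(a, b). a \<in> A \<and> b \<in> B \<and> b < a} + card {(a, b). a \<in> A \<and> b \<in> C \<and> b < a}"
    using assms by (intro card_Un_disjoint finite_inversions) auto
  ultimately show ?thesis
    unfolding inv_sign_def by (simp add: power_add)
qed

lemma inv_sign_insert_left:
  "finite A \<Longrightarrow> finite C \<Longrightarrow> k \<notin> A \<Longrightarrow> inv_sign (insert k A) C = inv_sign {k} C * inv_sign A C"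
  using inv_sign_Un_left[of "{k}" A C] by simp

lemma inv_sign_insert_right:
  "finite A \<Longrightarrow> finite C \<Longrightarrow> k \<notin> C \<Longrightarrow> inv_sign A (insert k C) = inv_sign A {k} * inv_sign A C"
  using inv_sign_Un_right[of A "{k}" C] by simp

lemma inv_sign_insert_self:
  assumes "finite C"
  shows "inv_sign {k} (insert k C) = inv_sign {k} C"
proof -
  have "{(a, b). a \<in> {k} \<and> b \<in> {k} \<and> b < a} = {}" by auto
  then have "inv_sign {k} {k} = 1" by (simp only: inv_sign_def card.empty power_0)
  then show ?thesis
    using assms inv_sign_insert_right[of "{k}" C k] by (cases "k \<in> C") (simp_all add: insert_absorb)
qed

lemma inv_sign_cases: "inv_sign A B = 1 \<or> inv_sign A B = -1"
  unfolding inv_sign_def by (cases "even (card {(a, b). a \<in> A \<and> b \<in> B \<and> b < a})") simp_all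

lemma inv_sign_Diff_split:
  assumes "finite S" "A \<subseteq> S"
  shows "inv_sign {k} S = inv_sign {k} A * inv_sign {k} (S - A)"
proof -
  have "S = A \<union> (S - A)" using assms(2) by auto
  then show ?thesis
    using inv_sign_Un_right[of "{k}" A "S - A"] assms finite_subset by (metis Diff_disjoint finite.emptyI finite_insert finite_Diff)
qed

lemma inv_sign_singleton: "(-1) ^ card {s \<in> S. s < j} = inv_sign {j} S"
proof -
  have "{(a, b). a \<in> {j} \<and> b \<in> S \<and> b < a} = Pair j ` {s \<in> S. s < j}" by auto
  then show ?thesis
    unfolding inv_sign_def by (simp add: card_image inj_on_def)
qed

lemma inv_sign_swap:
  assumes "finite A" "j \<notin> A"
  shows "inv_sign A {j} * inv_sign {j} A = (-1) ^ card A"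
proof -
  have "{(a, b). a \<in> A \<and> b \<in> {j} \<and> b < a} = (\<lambda>a. (a, j)) ` {a \<in> A. j < a}" by auto
  then have "inv_sign A {j} = (-1) ^ card {a \<in> A. j < a}"
    unfolding inv_sign_def by (simp add: card_image inj_on_def)
  moreover have "A = {a \<in> A. j < a} \<union> {a \<in> A. a < j}"
    using assms(2) by (auto simp: not_less le_less)
  then have "card A = card {a \<in> A. j < a} + card {a \<in> A. a < j}"
    using assms(1) by (metis (no_types, lifting) card_Un_disjoint finite_Un disjoint_iff mem_Collect_eq less_asym)
  ultimately show ?thesis
    by (simp add: inv_sign_singleton[symmetric] power_add)
qed

lemma sum_Pow_insert:
  assumes "finite S" "j \<notin> S"
  shows "(\<Sum>A\<in>Pow (insert j S). f A) = (\<Sum>A\<in>Pow S. f A) + (\<Sum>A\<in>Pow S. f (insert j A))"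
proof -
  have "inj_on (insert j) (Pow S)"
    using assms(2) by (auto simp: inj_on_def)
  moreover have "Pow S \<inter> insert j ` Pow S = {}"
    using assms(2) by auto
  ultimately show ?thesis
    unfolding Pow_insert using assms(1) by (simp add: sum.union_disjoint sum.reindex)
qed

(* A form at a fixed point is its coefficient function a :: nat set => real, a A being the
   coefficient of dx_A. ext_mult k and contract j are dx_k wedge _ and the contraction with the j-th
   basis vector; a datum da k A stands for the partial derivative d_k of a A. *)

definition wedge_pt :: "(nat set \<Rightarrow> real) \<Rightarrow> (nat set \<Rightarrow> real) \<Rightarrow> nat set \<Rightarrow> real" where
  "wedge_pt a b S = (\<Sum>A\<in>Pow S. inv_sign A (S - A) * a A * b (S - A))"

definition grade_inv :: "(nat set \<Rightarrow> real) \<Rightarrow> nat set \<Rightarrow> real" where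
  "grade_inv a A = (-1) ^ card A * a A"

definition ext_mult :: "nat \<Rightarrow> (nat set \<Rightarrow> real) \<Rightarrow> nat set \<Rightarrow> real" where
  "ext_mult k a S = (if k \<in> S then inv_sign {k} S * a (S - {k}) else 0)"

definition contract :: "nat \<Rightarrow> (nat set \<Rightarrow> real) \<Rightarrow> nat set \<Rightarrow> real" where
  "contract j a S = (if j \<in> S then 0 else inv_sign {j} S * a (insert j S))"

lemma wedge_pt_cong:
  "(\<And>A. A \<subseteq> S \<Longrightarrow> a A = a' A) \<Longrightarrow> (\<And>A. A \<subseteq> S \<Longrightarrow> b A = b' A) \<Longrightarrow>
   wedge_pt a b S = wedge_pt a' b' S"
  unfolding wedge_pt_def by (intro sum.cong refl) auto

lemma wedge_pt_add_left: "wedge_pt (\<lambda>A. a1 A + a2 A) b S = wedge_pt a1 b S + wedge_pt a2 b S"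
  unfolding wedge_pt_def by (simp add: algebra_simps sum.distrib)

lemma wedge_pt_add_right: "wedge_pt a (\<lambda>A. b1 A + b2 A) S = wedge_pt a b1 S + wedge_pt a b2 S"
  unfolding wedge_pt_def by (simp add: algebra_simps sum.distrib)

lemma wedge_pt_uminus_left: "wedge_pt (\<lambda>A. - a A) b S = - wedge_pt a b S"
  unfolding wedge_pt_def by (simp add: sum_negf)

lemma wedge_pt_scale_left: "wedge_pt (\<lambda>A. c * a A) b S = c * wedge_pt a b S"
  unfolding wedge_pt_def by (simp add: sum_distrib_left algebra_simps)

lemma wedge_pt_scale_right: "wedge_pt a (\<lambda>A. c * b A) S = c * wedge_pt a b S"
  unfolding wedge_pt_def by (simp add: sum_distrib_left algebra_simps)

lemma wedge_pt_sum_left: "wedge_pt (\<lambda>A. \<Sum>i\<in>I. a i A) b S = (\<Sum>i\<in>I. wedge_pt (a i) b S)"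
  unfolding wedge_pt_def by (simp add: sum_distrib_left sum_distrib_right sum.swap[of _ I] algebra_simps)

lemma wedge_pt_sum_right: "wedge_pt a (\<lambda>A. \<Sum>i\<in>I. b i A) S = (\<Sum>i\<in>I. wedge_pt a (b i) S)"
  unfolding wedge_pt_def by (simp add: sum_distrib_left sum_distrib_right sum.swap[of _ I] algebra_simps)

lemma wedge_pt_zero_left: "wedge_pt (\<lambda>A. 0) b S = 0"
  unfolding wedge_pt_def by simp

lemma wedge_pt_zero_right: "wedge_pt a (\<lambda>A. 0) S = 0"
  unfolding wedge_pt_def by simp

lemma grade_inv_grade_inv [simp]: "grade_inv (grade_inv a) = a"
  unfolding grade_inv_def by (simp add: fun_eq_iff flip: power_add)

lemma ext_mult_grade_inv:
  assumes "finite S"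
  shows "ext_mult k (grade_inv a) S = - grade_inv (ext_mult k a) S"
proof (cases "k \<in> S")
  case True
  with assms have "card S > 0" using card_gt_0_iff by blast
  then have "card S = Suc (card S - 1)" by simp
  then have "(-1::real) ^ card S = - ((-1) ^ (card S - 1))" by (metis power_Suc mult_minus1)
  with True assms show ?thesis by (simp add: ext_mult_def grade_inv_def)
qed (simp add: ext_mult_def grade_inv_def)

lemma contract_grade_inv: "finite S \<Longrightarrow> contract j (grade_inv a) S = - grade_inv (contract j a) S"
  by (simp add: contract_def grade_inv_def)

lemma ext_mult_wedge_left:
  assumes "finite S"
  shows "ext_mult k (wedge_pt a b) S = wedge_pt (ext_mult k a) b S"
proof (cases "k \<in> S")
  case False
  then show ?thesis by (auto simp: ext_mult_def wedge_pt_def intro!: sum.neutral)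
next
  case True
  define S' where "S' = S - {k}"
  have S: "S = insert k S'" "k \<notin> S'" "finite S'" using True assms by (auto simp: S'_def)
  have sign: "inv_sign {k} S * inv_sign A (S' - A) = inv_sign (insert k A) (S' - A) * inv_sign {k} (insert k A)"
    if "A \<subseteq> S'" for A
  proof -
    have fin: "finite A" "finite (S' - A)" "k \<notin> A" using S that finite_subset by auto
    show ?thesis
      unfolding S(1) inv_sign_insert_self[OF S(3)] inv_sign_Diff_split[OF S(3) that] inv_sign_insert_left[OF fin(1,2,3)]
        inv_sign_insert_self[OF fin(1)]
      by (simp only: mult_ac)
  qed
  have "wedge_pt (ext_mult k a) b S
      = (\<Sum>A\<in>Pow S'. inv_sign (insert k A) (S' - A) * inv_sign {k} (insert k A) * a A * b (S' - A))"
  proof -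
    have notin: "k \<notin> A" if "A \<in> Pow S'" for A using S(2) that by auto
    have "(\<Sum>A\<in>Pow S'. inv_sign A (S - A) * ext_mult k a A * b (S - A)) = 0"
      by (intro sum.neutral) (simp add: ext_mult_def notin)
    moreover have "insert k S' - insert k A = S' - A" "insert k A - {k} = A" if "A \<in> Pow S'" for A
      using notin[OF that] S(2) by auto
    ultimately show ?thesis
      unfolding wedge_pt_def S(1) sum_Pow_insert[OF S(3,2)]
      by (simp add: ext_mult_def mult.assoc cong: sum.cong_simp)
  qed
  also have "\<dots> = (\<Sum>A\<in>Pow S'. inv_sign {k} S * inv_sign A (S' - A) * a A * b (S' - A))"
    using sign by (intro sum.cong refl) simp
  also have "\<dots> = ext_mult k (wedge_pt a b) S"
    unfolding ext_mult_def wedge_pt_def using True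
    by (simp add: S'_def[symmetric] sum_distrib_left mult.assoc)
  finally show ?thesis ..
qed

lemma ext_mult_wedge_right:
  assumes "finite S"
  shows "ext_mult k (wedge_pt a b) S = wedge_pt (grade_inv a) (ext_mult k b) S"
proof (cases "k \<in> S")
  case False
  then show ?thesis by (auto simp: ext_mult_def wedge_pt_def intro!: sum.neutral)
next
  case True
  define S' where "S' = S - {k}"
  have S: "S = insert k S'" "k \<notin> S'" "finite S'" using True assms by (auto simp: S'_def)
  have notin: "k \<notin> A" if "A \<in> Pow S'" for A using S(2) that by auto
  have sign: "inv_sign {k} S * inv_sign A (S' - A)
      = inv_sign A (insert k (S' - A)) * (-1) ^ card A * inv_sign {k} (insert k (S' - A))"
    if "A \<in> Pow S'" for A
  proof -
    have fin: "finite A" "finite (S' - A)" "k \<notin> S' - A" using S that finite_subset by auto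
    show ?thesis
      unfolding S(1) inv_sign_insert_self[OF S(3)] inv_sign_Diff_split[OF S(3) PowD[OF that]] inv_sign_insert_right[OF fin]
        inv_sign_insert_self[OF fin(2)] inv_sign_swap[OF fin(1) notin[OF that], symmetric]
      using inv_sign_cases[of A "{k}"] by (elim disjE) (simp_all add: mult_ac)
  qed
  have "wedge_pt (grade_inv a) (ext_mult k b) S
      = (\<Sum>A\<in>Pow S'. inv_sign A (insert k (S' - A)) * (-1) ^ card A * inv_sign {k} (insert k (S' - A))
           * a A * b (S' - A))"
  proof -
    have "(\<Sum>A\<in>Pow S'. inv_sign (insert k A) (S - insert k A) * grade_inv a (insert k A)
            * ext_mult k b (S - insert k A)) = 0"
      by (intro sum.neutral) (simp add: ext_mult_def)
    moreover have "insert k S' - A = insert k (S' - A)" "insert k (S' - A) - {k} = S' - A"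
      if "A \<in> Pow S'" for A
      using notin[OF that] S(2) by auto
    ultimately show ?thesis
      unfolding wedge_pt_def S(1) sum_Pow_insert[OF S(3,2)]
      by (simp add: ext_mult_def grade_inv_def mult_ac cong: sum.cong_simp)
  qed
  also have "\<dots> = (\<Sum>A\<in>Pow S'. inv_sign {k} S * inv_sign A (S' - A) * a A * b (S' - A))"
    using sign by (intro sum.cong refl) simp
  also have "\<dots> = ext_mult k (wedge_pt a b) S"
    unfolding ext_mult_def wedge_pt_def using True
    by (simp add: S'_def[symmetric] sum_distrib_left mult.assoc)
  finally show ?thesis ..
qed

lemma contract_wedge_fresh:
  assumes "finite S" "j \<notin> S"
  shows "contract j (wedge_pt a b) S = wedge_pt (contract j a) b S + wedge_pt (grade_inv a) (contract j b) S"
proof -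
  have notin: "j \<notin> A" "j \<notin> S - A" if "A \<in> Pow S" for A using assms(2) that by auto
  have fin: "finite A" "finite (S - A)" if "A \<in> Pow S" for A using assms(1) that finite_subset by auto
  have split: "inv_sign {j} S = inv_sign {j} A * inv_sign {j} (S - A)" if "A \<in> Pow S" for A
    using inv_sign_Diff_split[OF assms(1) PowD[OF that]] by simp
  have sign_left: "inv_sign {j} S * inv_sign (insert j A) (S - A) = inv_sign A (S - A) * inv_sign {j} A"
    if "A \<in> Pow S" for A
    unfolding split[OF that] inv_sign_insert_left[OF fin[OF that] notin(1)[OF that]]
    using inv_sign_cases[of "{j}" "S - A"] by (elim disjE) (simp_all add: mult_ac)
  have sign_right: "inv_sign {j} S * inv_sign A (insert j (S - A))
      = inv_sign A (S - A) * (-1) ^ card A * inv_sign {j} (S - A)"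
    if "A \<in> Pow S" for A
    unfolding split[OF that] inv_sign_insert_right[OF fin[OF that] notin(2)[OF that]]
      inv_sign_swap[OF fin(1)[OF that] notin(1)[OF that], symmetric]
    by (simp add: mult_ac)
  have "contract j (wedge_pt a b) S
      = (\<Sum>A\<in>Pow S. (inv_sign {j} S * inv_sign A (insert j (S - A))) * (a A * b (insert j (S - A))))
      + (\<Sum>A\<in>Pow S. (inv_sign {j} S * inv_sign (insert j A) (S - A)) * (a (insert j A) * b (S - A)))"
  proof -
    have "insert j S - A = insert j (S - A)" "insert j S - insert j A = S - A" if "A \<in> Pow S" for A
      using notin[OF that] assms(2) by auto
    then show ?thesis
      unfolding contract_def wedge_pt_def sum_Pow_insert[OF assms]
      by (simp add: assms(2) sum_distrib_left distrib_left mult_ac cong: sum.cong_simp)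
  qed
  also have "\<dots> = (\<Sum>A\<in>Pow S. (inv_sign A (S - A) * (-1) ^ card A * inv_sign {j} (S - A)) * (a A * b (insert j (S - A))))
      + (\<Sum>A\<in>Pow S. (inv_sign A (S - A) * inv_sign {j} A) * (a (insert j A) * b (S - A)))"
    using sign_left sign_right by (intro arg_cong2[where f="(+)"] sum.cong refl) simp_all
  also have "\<dots> = wedge_pt (grade_inv a) (contract j b) S + wedge_pt (contract j a) b S"
    unfolding wedge_pt_def contract_def grade_inv_def using notin
    by (simp add: mult_ac cong: sum.cong_simp)
  finally show ?thesis by simp
qed

lemma contract_wedge_mem:
  assumes "finite S" "j \<in> S"
  shows "wedge_pt (contract j a) b S + wedge_pt (grade_inv a) (contract j b) S = 0"
proof -
  define S' where "S' = S - {j}"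
  have S: "S = insert j S'" "j \<notin> S'" "finite S'" using assms by (auto simp: S'_def)
  have notin: "j \<notin> A" if "A \<in> Pow S'" for A using S(2) that by auto
  have fin: "finite A" "finite (S' - A)" "j \<notin> S' - A" if "A \<in> Pow S'" for A
    using S that finite_subset by auto
  have sign: "inv_sign A (insert j (S' - A)) * inv_sign {j} A
      = - (inv_sign (insert j A) (S' - A) * (-1) ^ card (insert j A) * inv_sign {j} (S' - A))"
    if "A \<in> Pow S'" for A
    unfolding inv_sign_insert_right[OF fin[OF that]] inv_sign_insert_left[OF fin(1,2)[OF that] notin[OF that]]
      card_insert_disjoint[OF fin(1)[OF that] notin[OF that]] power_Suc
      inv_sign_swap[OF fin(1)[OF that] notin[OF that], symmetric]
    using inv_sign_cases[of "{j}" "S' - A"] inv_sign_cases[of A "{j}"]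
    by (elim disjE) (simp_all add: mult_ac)
  have "insert j S' - A = insert j (S' - A)" "insert j S' - insert j A = S' - A" if "A \<in> Pow S'" for A
    using notin[OF that] S(2) by auto
  then have "wedge_pt (contract j a) b S + wedge_pt (grade_inv a) (contract j b) S
      = (\<Sum>A\<in>Pow S'. (inv_sign A (insert j (S' - A)) * inv_sign {j} A) * (a (insert j A) * b (insert j (S' - A))))
      + (\<Sum>A\<in>Pow S'. (inv_sign (insert j A) (S' - A) * (-1) ^ card (insert j A) * inv_sign {j} (S' - A))
           * (a (insert j A) * b (insert j (S' - A))))"
    unfolding wedge_pt_def contract_def grade_inv_def S(1) sum_Pow_insert[OF S(3,2)] using notin
    by (simp add: mult_ac cong: sum.cong_simp)
  also have "\<dots> = 0"
    using sign by (simp add: sum.distrib[symmetric] cong: sum.cong_simp)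
  finally show ?thesis .
qed

lemma contract_wedge:
  assumes "finite S"
  shows "contract j (wedge_pt a b) S = wedge_pt (contract j a) b S + wedge_pt (grade_inv a) (contract j b) S"
  using contract_wedge_fresh[OF assms] contract_wedge_mem[OF assms]
  by (cases "j \<in> S") (simp_all add: contract_def)

definition d_pt :: "nat set \<Rightarrow> (nat \<Rightarrow> nat set \<Rightarrow> real) \<Rightarrow> nat set \<Rightarrow> real" where
  "d_pt K da S = (\<Sum>k\<in>K. ext_mult k (da k) S)"

definition interior_pt :: "nat set \<Rightarrow> (nat \<Rightarrow> real) \<Rightarrow> (nat set \<Rightarrow> real) \<Rightarrow> nat set \<Rightarrow> real" where
  "interior_pt D w a S = (\<Sum>j\<in>D. w j * contract j a S)"

lemma ext_mult_add: "ext_mult k (\<lambda>A. a A + b A) S = ext_mult k a S + ext_mult k b S"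
  by (simp add: ext_mult_def algebra_simps)

lemma contract_add: "contract j (\<lambda>A. a A + b A) S = contract j a S + contract j b S"
  by (simp add: contract_def algebra_simps)

lemma d_pt_add: "d_pt K (\<lambda>k A. f k A + g k A) S = d_pt K f S + d_pt K g S"
  by (simp add: d_pt_def ext_mult_add sum.distrib)

lemma interior_pt_add: "interior_pt D w (\<lambda>A. a A + b A) S = interior_pt D w a S + interior_pt D w b S"
  by (simp add: interior_pt_def contract_add sum.distrib algebra_simps)

lemma d_pt_cong: "(\<And>k A. A \<subseteq> S \<Longrightarrow> f k A = g k A) \<Longrightarrow> d_pt K f S = d_pt K g S"
  unfolding d_pt_def ext_mult_def by (intro sum.cong refl) auto

lemma interior_pt_cong:
  "(\<And>j. j \<in> D \<Longrightarrow> j \<notin> S \<Longrightarrow> a (insert j S) = a' (insert j S)) \<Longrightarrow>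
   interior_pt D w a S = interior_pt D w a' S"
  unfolding interior_pt_def contract_def by (intro sum.cong refl) auto

lemma interior_pt_eq_sum_Diff:
  "finite D \<Longrightarrow> interior_pt D w a S = (\<Sum>j\<in>D - S. (-1) ^ card {s \<in> S. s < j} * w j * a (insert j S))"
  unfolding interior_pt_def contract_def inv_sign_singleton
  by (rule sum.mono_neutral_cong_right) (auto simp: mult_ac)

lemma d_pt_eq_sum:
  "finite K \<Longrightarrow> S \<subseteq> K \<Longrightarrow> d_pt K da S = (\<Sum>k\<in>S. (-1) ^ card {s \<in> S. s < k} * da k (S - {k}))"
  unfolding d_pt_def ext_mult_def inv_sign_singleton
  by (subst sum.mono_neutral_right[of K S]) auto

lemma d_pt_grade_inv: "finite S \<Longrightarrow> d_pt K (\<lambda>k. grade_inv (da k)) S = - grade_inv (d_pt K da) S"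
  by (simp add: d_pt_def ext_mult_grade_inv grade_inv_def sum_distrib_left sum_negf)

lemma interior_pt_grade_inv: "finite S \<Longrightarrow> interior_pt D w (grade_inv a) S = - grade_inv (interior_pt D w a) S"
  by (simp add: interior_pt_def contract_grade_inv grade_inv_def sum_distrib_left sum_negf algebra_simps)

lemma d_pt_wedge:
  assumes "finite S"
  shows "d_pt K (\<lambda>k B. wedge_pt (da k) b B + wedge_pt a (db k) B) S
       = wedge_pt (d_pt K da) b S + wedge_pt (grade_inv a) (d_pt K db) S"
proof -
  have "d_pt K da = (\<lambda>S. \<Sum>k\<in>K. ext_mult k (da k) S)" "d_pt K db = (\<lambda>S. \<Sum>k\<in>K. ext_mult k (db k) S)"
    by (simp_all add: d_pt_def fun_eq_iff)
  then show ?thesis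
    unfolding d_pt_def ext_mult_add
    by (simp add: sum.distrib wedge_pt_sum_left wedge_pt_sum_right
        ext_mult_wedge_left[OF assms, symmetric] ext_mult_wedge_right[OF assms, symmetric])
qed

lemma interior_pt_wedge:
  assumes "finite S"
  shows "interior_pt D w (wedge_pt a b) S
       = wedge_pt (interior_pt D w a) b S + wedge_pt (grade_inv a) (interior_pt D w b) S"
proof -
  have "interior_pt D w a = (\<lambda>S. \<Sum>j\<in>D. w j * contract j a S)"
    "interior_pt D w b = (\<lambda>S. \<Sum>j\<in>D. w j * contract j b S)"
    by (simp_all add: interior_pt_def fun_eq_iff)
  then show ?thesis
    unfolding interior_pt_def contract_wedge[OF assms]
    by (simp add: sum.distrib wedge_pt_sum_left wedge_pt_sum_right wedge_pt_scale_left
        wedge_pt_scale_right distrib_left)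
qed

(* Cartan's formula L_w = d i_w + i_w d at a point, with the partial derivative d_k (i_w a)
   expanded by the product rule (dw k j stands for d_k w_j). *)

definition lie_pt :: "nat set \<Rightarrow> (nat \<Rightarrow> real) \<Rightarrow> (nat \<Rightarrow> nat \<Rightarrow> real) \<Rightarrow> (nat set \<Rightarrow> real)
    \<Rightarrow> (nat \<Rightarrow> nat set \<Rightarrow> real) \<Rightarrow> nat set \<Rightarrow> real" where
  "lie_pt D w dw a da S =
     d_pt D (\<lambda>k A. interior_pt D (dw k) a A + interior_pt D w (da k) A) S + interior_pt D w (d_pt D da) S"

lemma d_pt_scale: "d_pt K (\<lambda>k A. c * f k A) S = c * d_pt K f S"
  by (simp add: d_pt_def ext_mult_def sum_distrib_left if_distrib algebra_simps cong: if_cong)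

lemma contract_scale: "contract j (\<lambda>A. c * a A) S = c * contract j a S"
  by (simp add: contract_def)

lemma interior_pt_scale: "interior_pt D w (\<lambda>A. c * a A) S = c * interior_pt D w a S"
  by (simp add: interior_pt_def contract_scale sum_distrib_left mult_ac)

lemma lie_pt_add:
  "lie_pt D w dw (\<lambda>A. a1 A + a2 A) (\<lambda>k A. da1 k A + da2 k A) S
   = lie_pt D w dw a1 da1 S + lie_pt D w dw a2 da2 S"
proof -
  have "d_pt D (\<lambda>k A. da1 k A + da2 k A) = (\<lambda>B. d_pt D da1 B + d_pt D da2 B)"
    by (simp add: fun_eq_iff d_pt_add)
  moreover have "d_pt D (\<lambda>k A. interior_pt D (dw k) (\<lambda>A. a1 A + a2 A) A
                              + interior_pt D w (\<lambda>A. da1 k A + da2 k A) A) S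
      = d_pt D (\<lambda>k A. (interior_pt D (dw k) a1 A + interior_pt D w (da1 k) A)
                     + (interior_pt D (dw k) a2 A + interior_pt D w (da2 k) A)) S"
    by (simp add: interior_pt_add add_ac)
  ultimately show ?thesis
    by (simp add: lie_pt_def d_pt_add interior_pt_add)
qed

lemma lie_pt_scale:
  "lie_pt D w dw (\<lambda>A. c * a A) (\<lambda>k A. c * da k A) S = c * lie_pt D w dw a da S"
proof -
  have "d_pt D (\<lambda>k A. c * da k A) = (\<lambda>B. c * d_pt D da B)"
    by (simp add: fun_eq_iff d_pt_scale)
  moreover have "d_pt D (\<lambda>k A. interior_pt D (dw k) (\<lambda>A. c * a A) A + interior_pt D w (\<lambda>A. c * da k A) A) S
      = c * d_pt D (\<lambda>k A. interior_pt D (dw k) a A + interior_pt D w (da k) A) S"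
    by (subst d_pt_scale[symmetric]) (simp add: interior_pt_scale distrib_left)
  ultimately show ?thesis
    by (simp add: lie_pt_def interior_pt_scale distrib_left)
qed

lemma interior_pt_d_pt_wedge:
  assumes "finite S"
  shows "interior_pt D w (d_pt K (\<lambda>k B. wedge_pt (da k) b B + wedge_pt a (db k) B)) S
       = wedge_pt (interior_pt D w (d_pt K da)) b S + wedge_pt (grade_inv (d_pt K da)) (interior_pt D w b) S
         + wedge_pt (interior_pt D w (grade_inv a)) (d_pt K db) S + wedge_pt a (interior_pt D w (d_pt K db)) S"
proof -
  have "interior_pt D w (d_pt K (\<lambda>k B. wedge_pt (da k) b B + wedge_pt a (db k) B)) S
      = interior_pt D w (\<lambda>B. wedge_pt (d_pt K da) b B + wedge_pt (grade_inv a) (d_pt K db) B) S"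
    using assms by (intro interior_pt_cong d_pt_wedge) simp
  then show ?thesis
    using assms by (simp add: interior_pt_add interior_pt_wedge)
qed

lemma d_pt_interior_pt_wedge:
  assumes "finite S"
  shows "d_pt K (\<lambda>k A. interior_pt D (dw k) (wedge_pt a b) A
                    + interior_pt D w (\<lambda>B. wedge_pt (da k) b B + wedge_pt a (db k) B) A) S
       = wedge_pt (d_pt K (\<lambda>k A. interior_pt D (dw k) a A + interior_pt D w (da k) A)) b S
         + wedge_pt a (d_pt K (\<lambda>k A. interior_pt D (dw k) b A + interior_pt D w (db k) A)) S
         - wedge_pt (interior_pt D w (grade_inv a)) (d_pt K db) S
         - wedge_pt (grade_inv (d_pt K da)) (interior_pt D w b) S"
proof -
  let ?i = "interior_pt D w"
  define X where "X = (\<lambda>k A. interior_pt D (dw k) a A + ?i (da k) A)"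
  define Y where "Y = (\<lambda>k A. interior_pt D (dw k) b A + ?i (db k) A)"
  have "d_pt K (\<lambda>k A. interior_pt D (dw k) (wedge_pt a b) A
                    + ?i (\<lambda>B. wedge_pt (da k) b B + wedge_pt a (db k) B) A) S
      = d_pt K (\<lambda>k B. wedge_pt (X k) b B + wedge_pt (?i a) (db k) B) S
        + d_pt K (\<lambda>k B. wedge_pt (grade_inv (da k)) (?i b) B + wedge_pt (grade_inv a) (Y k) B) S"
    unfolding d_pt_add[symmetric] using assms
    by (intro d_pt_cong) (simp add: finite_subset interior_pt_wedge interior_pt_add X_def Y_def
        wedge_pt_add_left wedge_pt_add_right)
  also have "\<dots> = wedge_pt (d_pt K X) b S + wedge_pt (grade_inv (?i a)) (d_pt K db) S
      + (wedge_pt (d_pt K (\<lambda>k. grade_inv (da k))) (?i b) S + wedge_pt a (d_pt K Y) S)"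
    using d_pt_wedge[OF assms, of K X b "?i a" db] d_pt_wedge[OF assms, of K "\<lambda>k. grade_inv (da k)" "?i b" "grade_inv a" Y]
    by simp
  also have "wedge_pt (grade_inv (?i a)) (d_pt K db) S = - wedge_pt (?i (grade_inv a)) (d_pt K db) S"
    using finite_subset[OF _ assms] by (subst wedge_pt_uminus_left[symmetric], intro wedge_pt_cong)
      (auto simp: interior_pt_grade_inv)
  also have "wedge_pt (d_pt K (\<lambda>k. grade_inv (da k))) (?i b) S = - wedge_pt (grade_inv (d_pt K da)) (?i b) S"
    using finite_subset[OF _ assms] by (subst wedge_pt_uminus_left[symmetric], intro wedge_pt_cong)
      (auto simp: d_pt_grade_inv)
  finally show ?thesis by (simp add: X_def Y_def)
qed

lemma lie_pt_wedge:
  assumes "finite S"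
  shows "lie_pt D w dw (wedge_pt a b) (\<lambda>k B. wedge_pt (da k) b B + wedge_pt a (db k) B) S
       = wedge_pt (lie_pt D w dw a da) b S + wedge_pt a (lie_pt D w dw b db) S"
proof -
  have "lie_pt D w dw c dc = (\<lambda>B. d_pt D (\<lambda>k A. interior_pt D (dw k) c A + interior_pt D w (dc k) A) B
      + interior_pt D w (d_pt D dc) B)" for c dc
    by (simp add: lie_pt_def fun_eq_iff)
  then show ?thesis
    unfolding lie_pt_def d_pt_interior_pt_wedge[OF assms] interior_pt_d_pt_wedge[OF assms]
    by (simp add: wedge_pt_add_left wedge_pt_add_right)
qed

section \<open>Lie derivatives of sums and wedge products\<close>

definition form_pdx :: "(nat \<Rightarrow> 'n::finite) \<Rightarrow> 'n tform \<Rightarrow> real \<Rightarrow> real^'n \<Rightarrow> nat \<Rightarrow> nat set \<Rightarrow> real" where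
  "form_pdx idx \<Theta> t x k A = pdx idx k (\<lambda>t x. \<Theta> t x A) t x"

definition differentiable_form :: "(nat \<Rightarrow> 'n::finite) \<Rightarrow> real set \<Rightarrow> 'n tform \<Rightarrow> bool" where
  "differentiable_form idx T \<Theta> \<longleftrightarrow>
     (\<forall>t\<in>T. \<forall>x A. (\<forall>k. has_pdx idx k (\<lambda>t x. \<Theta> t x A) t x) \<and> has_pdt (\<lambda>t x. \<Theta> t x A) t x)"

context fixes idx :: "nat \<Rightarrow> 'n::finite"
begin

lemma wedge_eq_wedge_pt: "wedge \<alpha> \<beta> t x = wedge_pt (\<alpha> t x) (\<beta> t x)"
  by (simp add: fun_eq_iff wedge_def wedge_pt_def inv_sign_def)

lemma iprod_eq_interior_pt:
  "iprod idx u \<Theta> t x = interior_pt {1..CARD('n)} (\<lambda>j. ucomp idx u j t x) (\<Theta> t x)"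
  by (simp add: fun_eq_iff iprod_def interior_pt_eq_sum_Diff)

lemma dform_eq_d_pt:
  "S \<subseteq> {1..CARD('n)} \<Longrightarrow> dform idx \<Theta> t x S = d_pt {1..CARD('n)} (form_pdx idx \<Theta> t x) S"
  by (simp add: dform_def d_pt_eq_sum form_pdx_def)

lemma form_pdx_iprod:
  assumes "\<And>k A. has_pdx idx k (\<lambda>t x. \<Theta> t x A) t x" "\<And>j k. has_pdx idx k (ucomp idx u j) t x"
  shows "form_pdx idx (iprod idx u \<Theta>) t x
       = (\<lambda>k A. interior_pt {1..CARD('n)} (\<lambda>j. pdx idx k (ucomp idx u j) t x) (\<Theta> t x) A
         + interior_pt {1..CARD('n)} (\<lambda>j. ucomp idx u j t x) (form_pdx idx \<Theta> t x k) A)"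
  using assms
  by (simp add: fun_eq_iff iprod_def interior_pt_eq_sum_Diff form_pdx_def sum.distrib algebra_simps)

lemma lie_eq_lie_pt:
  assumes "\<And>k A. has_pdx idx k (\<lambda>t x. \<Theta> t x A) t x" "\<And>j k. has_pdx idx k (ucomp idx u j) t x"
    and "S \<subseteq> {1..CARD('n)}"
  shows "lie idx u \<Theta> t x S
       = lie_pt {1..CARD('n)} (\<lambda>j. ucomp idx u j t x) (\<lambda>k j. pdx idx k (ucomp idx u j) t x)
           (\<Theta> t x) (form_pdx idx \<Theta> t x) S"
proof -
  let ?D = "{1..CARD('n)}"
  have "dform idx (iprod idx u \<Theta>) t x S
      = d_pt ?D (\<lambda>k A. interior_pt ?D (\<lambda>j. pdx idx k (ucomp idx u j) t x) (\<Theta> t x) A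
                      + interior_pt ?D (\<lambda>j. ucomp idx u j t x) (form_pdx idx \<Theta> t x k) A) S"
    using assms by (simp add: dform_eq_d_pt form_pdx_iprod)
  moreover have "iprod idx u (dform idx \<Theta>) t x S
      = interior_pt ?D (\<lambda>j. ucomp idx u j t x) (d_pt ?D (form_pdx idx \<Theta> t x)) S"
    unfolding iprod_eq_interior_pt using assms(3)
    by (intro interior_pt_cong) (simp add: dform_eq_d_pt)
  ultimately show ?thesis
    by (simp add: lie_def lie_pt_def)
qed

lemma form_pdx_wedge:
  assumes "\<And>k A. has_pdx idx k (\<lambda>t x. \<alpha> t x A) t x" "\<And>k A. has_pdx idx k (\<lambda>t x. \<beta> t x A) t x"
  shows "form_pdx idx (wedge \<alpha> \<beta>) t x
       = (\<lambda>k S. wedge_pt (form_pdx idx \<alpha> t x k) (\<beta> t x) S + wedge_pt (\<alpha> t x) (form_pdx idx \<beta> t x k) S)"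
  using assms by (simp add: fun_eq_iff form_pdx_def wedge_def wedge_pt_def inv_sign_def
      sum.distrib algebra_simps)

lemma form_pdx_scale:
  assumes "\<And>k A. has_pdx idx k (\<lambda>t x. \<Theta> t x A) t x"
  shows "form_pdx idx (\<lambda>t x A. c * \<Theta> t x A) t x = (\<lambda>k A. c * form_pdx idx \<Theta> t x k A)"
  using assms by (simp add: fun_eq_iff form_pdx_def)

lemma form_pdx_add:
  assumes "\<And>k A. has_pdx idx k (\<lambda>t x. \<Theta>1 t x A) t x" "\<And>k A. has_pdx idx k (\<lambda>t x. \<Theta>2 t x A) t x"
  shows "form_pdx idx (\<lambda>t x A. \<Theta>1 t x A + \<Theta>2 t x A) t x
       = (\<lambda>k A. form_pdx idx \<Theta>1 t x k A + form_pdx idx \<Theta>2 t x k A)"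
  using assms by (simp add: fun_eq_iff form_pdx_def)

lemma has_pdx_wedge:
  "(\<And>A. has_pdx idx k (\<lambda>t x. \<alpha> t x A) t x) \<Longrightarrow> (\<And>A. has_pdx idx k (\<lambda>t x. \<beta> t x A) t x) \<Longrightarrow>
   has_pdx idx k (\<lambda>t x. wedge \<alpha> \<beta> t x S) t x"
  by (simp add: wedge_def)

lemma has_pdt_wedge:
  "(\<And>A. has_pdt (\<lambda>t x. \<alpha> t x A) t x) \<Longrightarrow> (\<And>A. has_pdt (\<lambda>t x. \<beta> t x A) t x) \<Longrightarrow>
   has_pdt (\<lambda>t x. wedge \<alpha> \<beta> t x S) t x"
  by (simp add: wedge_def)

lemma pdt_wedge:
  assumes "\<And>A. has_pdt (\<lambda>t x. \<alpha> t x A) t x" "\<And>A. has_pdt (\<lambda>t x. \<beta> t x A) t x"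
  shows "pdt (\<lambda>t x. wedge \<alpha> \<beta> t x S) t x
       = wedge_pt (\<lambda>A. pdt (\<lambda>t x. \<alpha> t x A) t x) (\<beta> t x) S
         + wedge_pt (\<alpha> t x) (\<lambda>A. pdt (\<lambda>t x. \<beta> t x A) t x) S"
  using assms by (simp add: wedge_def wedge_pt_def inv_sign_def sum.distrib algebra_simps)


lemma differentiable_formD:
  "differentiable_form idx T \<Theta> \<Longrightarrow> t \<in> T \<Longrightarrow> has_pdx idx k (\<lambda>t x. \<Theta> t x A) t x"
  "differentiable_form idx T \<Theta> \<Longrightarrow> t \<in> T \<Longrightarrow> has_pdt (\<lambda>t x. \<Theta> t x A) t x"
  by (simp_all add: differentiable_form_def)

lemma differentiable_form_scale:
  "differentiable_form idx T \<Theta> \<Longrightarrow> differentiable_form idx T (\<lambda>t x S. c * \<Theta> t x S)"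
  by (simp add: differentiable_form_def)

lemma differentiable_form_add:
  "differentiable_form idx T \<Theta>1 \<Longrightarrow> differentiable_form idx T \<Theta>2 \<Longrightarrow>
   differentiable_form idx T (\<lambda>t x S. \<Theta>1 t x S + \<Theta>2 t x S)"
  by (simp add: differentiable_form_def)

lemma differentiable_form_wedge:
  "differentiable_form idx T \<alpha> \<Longrightarrow> differentiable_form idx T \<beta> \<Longrightarrow> differentiable_form idx T (wedge \<alpha> \<beta>)"
  by (simp add: differentiable_form_def has_pdx_wedge has_pdt_wedge)

lemma lie_invariant_iff_lie_pt:
  assumes u: "\<forall>t\<in>T. \<forall>x j k. has_pdx idx k (ucomp idx u j) t x"
    and \<Theta>: "differentiable_form idx T \<Theta>"
  shows "lie_invariant idx T u \<Theta> \<longleftrightarrow>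
    (\<forall>t\<in>T. \<forall>x S. S \<subseteq> {1..CARD('n)} \<longrightarrow>
       pdt (\<lambda>t x. \<Theta> t x S) t x
       + lie_pt {1..CARD('n)} (\<lambda>j. ucomp idx u j t x) (\<lambda>k j. pdx idx k (ucomp idx u j) t x)
           (\<Theta> t x) (form_pdx idx \<Theta> t x) S = 0)"
  unfolding lie_invariant_def using u differentiable_formD[OF \<Theta>]
  by (simp add: lie_eq_lie_pt cong: conj_cong)

lemma lie_invariant_scale:
  assumes u: "\<forall>t\<in>T. \<forall>x j k. has_pdx idx k (ucomp idx u j) t x"
    and \<Theta>: "differentiable_form idx T \<Theta>" "lie_invariant idx T u \<Theta>"
  shows "lie_invariant idx T u (\<lambda>t x S. c * \<Theta> t x S)"
  using \<Theta> differentiable_formD[OF \<Theta>(1)]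
  by (simp add: lie_invariant_iff_lie_pt[OF u] differentiable_form_scale form_pdx_scale lie_pt_scale
      flip: distrib_left)

lemma lie_invariant_add:
  assumes u: "\<forall>t\<in>T. \<forall>x j k. has_pdx idx k (ucomp idx u j) t x"
    and \<Theta>1: "differentiable_form idx T \<Theta>1" "lie_invariant idx T u \<Theta>1"
    and \<Theta>2: "differentiable_form idx T \<Theta>2" "lie_invariant idx T u \<Theta>2"
  shows "lie_invariant idx T u (\<lambda>t x S. \<Theta>1 t x S + \<Theta>2 t x S)"

proof (subst lie_invariant_iff_lie_pt[OF u differentiable_form_add[OF \<Theta>1(1) \<Theta>2(1)]],
    intro ballI allI impI)
  fix t x S assume t: "t \<in> T" and S: "S \<subseteq> {1..CARD('n)}"
  let ?L = "lie_pt {1..CARD('n)} (\<lambda>j. ucomp idx u j t x) (\<lambda>k j. pdx idx k (ucomp idx u j) t x)"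
  have "pdt (\<lambda>t x. \<Theta>1 t x S) t x + ?L (\<Theta>1 t x) (form_pdx idx \<Theta>1 t x) S = 0"
    "pdt (\<lambda>t x. \<Theta>2 t x S) t x + ?L (\<Theta>2 t x) (form_pdx idx \<Theta>2 t x) S = 0"
    using \<Theta>1 \<Theta>2 t S by (simp_all add: lie_invariant_iff_lie_pt[OF u])
  then show "pdt (\<lambda>t x. \<Theta>1 t x S + \<Theta>2 t x S) t x
      + ?L (\<lambda>A. \<Theta>1 t x A + \<Theta>2 t x A) (form_pdx idx (\<lambda>t x S. \<Theta>1 t x S + \<Theta>2 t x S) t x) S = 0"
    using differentiable_formD[OF \<Theta>1(1) t] differentiable_formD[OF \<Theta>2(1) t]
    by (simp add: form_pdx_add lie_pt_add)
qed

lemma lie_invariant_wedge: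
  assumes u: "\<forall>t\<in>T. \<forall>x j k. has_pdx idx k (ucomp idx u j) t x"
    and \<alpha>: "differentiable_form idx T \<alpha>" "lie_invariant idx T u \<alpha>"
    and \<beta>: "differentiable_form idx T \<beta>" "lie_invariant idx T u \<beta>"
  shows "lie_invariant idx T u (wedge \<alpha> \<beta>)"
proof (subst lie_invariant_iff_lie_pt[OF u differentiable_form_wedge[OF \<alpha>(1) \<beta>(1)]],
    intro ballI allI impI)
  fix t x S assume t: "t \<in> T" and S: "S \<subseteq> {1..CARD('n)}"
  let ?L = "lie_pt {1..CARD('n)} (\<lambda>j. ucomp idx u j t x) (\<lambda>k j. pdx idx k (ucomp idx u j) t x)"
  let ?dt = "\<lambda>\<Theta> A. pdt (\<lambda>t x. \<Theta> t x A) t x"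
  have fin: "finite S" using S finite_subset by blast
  have inv: "?dt \<alpha> A + ?L (\<alpha> t x) (form_pdx idx \<alpha> t x) A = 0"
    "?dt \<beta> A + ?L (\<beta> t x) (form_pdx idx \<beta> t x) A = 0" if "A \<subseteq> S" for A
    using \<alpha> \<beta> t S that by (simp_all add: lie_invariant_iff_lie_pt[OF u])
  have "?L (wedge \<alpha> \<beta> t x) (form_pdx idx (wedge \<alpha> \<beta>) t x) S
      = wedge_pt (?L (\<alpha> t x) (form_pdx idx \<alpha> t x)) (\<beta> t x) S
        + wedge_pt (\<alpha> t x) (?L (\<beta> t x) (form_pdx idx \<beta> t x)) S"
    unfolding wedge_eq_wedge_pt form_pdx_wedge[OF differentiable_formD(1)[OF \<alpha>(1) t]
        differentiable_formD(1)[OF \<beta>(1) t]]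
    by (rule lie_pt_wedge[OF fin])
  moreover have "?dt (wedge \<alpha> \<beta>) S = wedge_pt (?dt \<alpha>) (\<beta> t x) S + wedge_pt (\<alpha> t x) (?dt \<beta>) S"
    by (rule pdt_wedge[OF differentiable_formD(2)[OF \<alpha>(1) t] differentiable_formD(2)[OF \<beta>(1) t]])
  ultimately have "?dt (wedge \<alpha> \<beta>) S + ?L (wedge \<alpha> \<beta> t x) (form_pdx idx (wedge \<alpha> \<beta>) t x) S
      = wedge_pt (\<lambda>A. ?dt \<alpha> A + ?L (\<alpha> t x) (form_pdx idx \<alpha> t x) A) (\<beta> t x) S
        + wedge_pt (\<alpha> t x) (\<lambda>A. ?dt \<beta> A + ?L (\<beta> t x) (form_pdx idx \<beta> t x) A) S"
    by (simp add: wedge_pt_add_left wedge_pt_add_right)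
  also have "\<dots> = wedge_pt (\<lambda>A. 0) (\<beta> t x) S + wedge_pt (\<alpha> t x) (\<lambda>A. 0) S"
    using inv by (intro arg_cong2[where f="(+)"] wedge_pt_cong) auto
  also have "\<dots> = 0"
    by (simp add: wedge_pt_zero_left wedge_pt_zero_right)
  finally show "?dt (wedge \<alpha> \<beta>) S + ?L (wedge \<alpha> \<beta> t x) (form_pdx idx (wedge \<alpha> \<beta>) t x) S = 0" .
qed

end

section \<open>The forms Omega_i\<close>

lemma card_2_sorted:
  fixes S :: "nat set"
  assumes "card S = 2"
  obtains a b where "a < b" "S = {a, b}"
proof -
  obtain x y where "S = {x, y}" "x \<noteq> y" using assms unfolding card_2_iff by blast
  then show ?thesis using that by (metis insert_commute linorder_neqE_nat)
qed

lemma card_3_sorted: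
  fixes S :: "nat set"
  assumes "card S = 3"
  obtains a b c where "a < b" "b < c" "S = {a, b, c}"
proof -
  have fin: "finite S" and "S \<noteq> {}" using assms by (auto intro: card_ge_0_finite)
  then have a: "Min S \<in> S" by simp
  then have "card (S - {Min S}) = 2" using assms fin by simp
  then obtain b c where bc: "b < c" "S - {Min S} = {b, c}" by (rule card_2_sorted)
  then have "Min S < b" using fin a by (metis Diff_iff Min_le insertI1 le_neq_implies_less singletonI)
  with bc a that show ?thesis by blast
qed

context fixes idx :: "nat \<Rightarrow> 'n::finite"
begin

lemma dform_one_form:
  assumes one: "\<And>t x A. card A \<noteq> 1 \<Longrightarrow> \<Theta> t x A = 0"
  shows "card S \<noteq> 2 \<Longrightarrow> dform idx \<Theta> t x S = 0"
    and "k < l \<Longrightarrow> dform idx \<Theta> t x {k, l} = pdx idx k (\<lambda>t x. \<Theta> t x {l}) t x - pdx idx l (\<lambda>t x. \<Theta> t x {k}) t x"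
proof -
  show "dform idx \<Theta> t x S = 0" if "card S \<noteq> 2"
  proof (cases "finite S")
    case True
    with that have "card (S - {k}) \<noteq> 1" if "k \<in> S" for k
      using that by (simp add: card_Diff_singleton)
    then show ?thesis
      unfolding dform_def by (intro sum.neutral ballI) (simp add: one pdx_zero)
  qed (simp add: dform_def)
  show "dform idx \<Theta> t x {k, l} = pdx idx k (\<lambda>t x. \<Theta> t x {l}) t x - pdx idx l (\<lambda>t x. \<Theta> t x {k}) t x"
    if "k < l"
  proof -
    have sets: "{s \<in> {k, l}. s < k} = {}" "{s \<in> {k, l}. s < l} = {k}" "{k, l} - {k} = {l}" "{k, l} - {l} = {k}"
      using that by auto
    have sum2: "(\<Sum>j\<in>{k, l}. g j) = g k + g l" for g :: "nat \<Rightarrow> real" using that by simp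
    show ?thesis unfolding dform_def sum2 sets by simp
  qed
qed

lemma iprod_two_form:
  assumes two: "\<And>t x A. card A \<noteq> 2 \<Longrightarrow> \<Theta> t x A = 0"
    and W: "\<And>t x k l. k < l \<Longrightarrow> \<Theta> t x {k, l} = W k l t x"
    and W_antisym: "\<And>t x k l. W l k t x = - W k l t x"
  shows "card A \<noteq> 1 \<Longrightarrow> iprod idx u \<Theta> t x A = 0"
    and "iprod idx u \<Theta> t x {l} = (\<Sum>j\<in>{1..CARD('n)}. ucomp idx u j t x * W j l t x)"
proof -
  show "iprod idx u \<Theta> t x A = 0" if "card A \<noteq> 1"
    unfolding iprod_def using that by (intro sum.neutral ballI) (cases "finite A"; simp add: two)
  have "(-1) ^ card {s \<in> {l}. s < j} * \<Theta> t x (insert j {l}) = W j l t x" if "j \<noteq> l" for j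
  proof (cases "j < l")
    case True
    then have "{s \<in> {l}. s < j} = {}" by auto
    with True show ?thesis by (simp only: W card.empty power_0 mult_1)
  next
    case False
    with that have "l < j" "{s \<in> {l}. s < j} = {l}" "insert j {l} = {l, j}" by auto
    then show ?thesis by (simp only: W W_antisym[of l j] card.insert_remove card.empty) simp
  qed
  then have "iprod idx u \<Theta> t x {l} = (\<Sum>j\<in>{1..CARD('n)} - {l}. ucomp idx u j t x * W j l t x)"
    unfolding iprod_def by (intro sum.cong) (auto simp: mult_ac)
  also have "\<dots> = (\<Sum>j\<in>{1..CARD('n)}. ucomp idx u j t x * W j l t x)"
    using W_antisym[of l l] by (intro sum.mono_neutral_left) auto
  finally show "iprod idx u \<Theta> t x {l} = (\<Sum>j\<in>{1..CARD('n)}. ucomp idx u j t x * W j l t x)" .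
qed

lemma dform_two_form_closed:
  assumes two: "\<And>t x A. card A \<noteq> 2 \<Longrightarrow> \<Theta> t x A = 0"
    and W: "\<And>t x k l. k < l \<Longrightarrow> \<Theta> t x {k, l} = W k l t x"
    and cyclic: "\<And>a b c. a < b \<Longrightarrow> b < c \<Longrightarrow>
        pdx idx a (W b c) t x - pdx idx b (W a c) t x + pdx idx c (W a b) t x = 0"
  shows "dform idx \<Theta> t x S = 0"
proof (cases "card S = 3")
  case False
  show ?thesis
  proof (cases "finite S")
    case True
    with False have "card (S - {k}) \<noteq> 2" if "k \<in> S" for k
      using that by (simp add: card_Diff_singleton)
    then show ?thesis
      unfolding dform_def by (intro sum.neutral ballI) (simp add: two pdx_zero)
  qed (simp add: dform_def)
next
  case True
  then obtain a b c where abc: "a < b" "b < c" "S = {a, b, c}" by (rule card_3_sorted)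
  have sets: "{s \<in> {a, b, c}. s < a} = {}" "{s \<in> {a, b, c}. s < b} = {a}" "{s \<in> {a, b, c}. s < c} = {a, b}"
    "{a, b, c} - {a} = {b, c}" "{a, b, c} - {b} = {a, c}" "{a, b, c} - {c} = {a, b}"
    using abc by auto
  have sum3: "(\<Sum>k\<in>{a, b, c}. g k) = g a + g b + g c" for g :: "nat \<Rightarrow> real"
    using abc by simp
  have "card {a, b} = 2" using abc by simp
  moreover have "pdx idx a (\<lambda>t x. \<Theta> t x {b, c}) t x = pdx idx a (W b c) t x"
    "pdx idx b (\<lambda>t x. \<Theta> t x {a, c}) t x = pdx idx b (W a c) t x"
    "pdx idx c (\<lambda>t x. \<Theta> t x {a, b}) t x = pdx idx c (W a b) t x"
    using abc by (simp_all add: W cong: pdx_cong)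
  ultimately show ?thesis
    unfolding dform_def abc(3) sum3 sets using cyclic[OF abc(1,2)] by simp
qed

end

definition alpha_coeff :: "(nat \<Rightarrow> 'n::finite) \<Rightarrow> (real \<Rightarrow> real^'n \<Rightarrow> real^'n) \<Rightarrow> nat \<Rightarrow> nat \<Rightarrow> 'n sfield" where
  "alpha_coeff idx u i l t x = alpha1 idx u i t x {l}"

definition omega_coeff :: "(nat \<Rightarrow> 'n::finite) \<Rightarrow> (real \<Rightarrow> real^'n \<Rightarrow> real^'n) \<Rightarrow> nat \<Rightarrow> nat \<Rightarrow> nat \<Rightarrow> 'n sfield" where
  "omega_coeff idx u i k l t x = pdx idx k (alpha_coeff idx u i l) t x - pdx idx l (alpha_coeff idx u i k) t x"

context fixes idx :: "nat \<Rightarrow> 'n::finite" and u :: "real \<Rightarrow> real^'n \<Rightarrow> real^'n"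
begin

lemma ucomp_out: "j \<notin> {1..CARD('n)} \<Longrightarrow> ucomp idx u j = (\<lambda>t x. 0)"
  by (auto simp: ucomp_def fun_eq_iff)

lemma alpha_coeff_eq: "alpha_coeff idx u i l = (if (l + 1) div 2 = i then ucomp idx u l else (\<lambda>t x. 0))"
proof (cases "i = 0")
  case True
  then show ?thesis by (auto simp: alpha_coeff_def alpha1_def ucomp_out fun_eq_iff)
next
  case False
  then have "(l + 1) div 2 = i \<longleftrightarrow> l = 2 * i - 1 \<or> l = 2 * i" by presburger
  then show ?thesis by (auto simp: alpha_coeff_def alpha1_def fun_eq_iff)
qed

lemma Omega_two_form: "card A \<noteq> 2 \<Longrightarrow> Omega idx u i t x A = 0"
  unfolding Omega_def by (rule dform_one_form(1)) (auto simp: alpha1_def)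

lemma Omega_pair: "k < l \<Longrightarrow> Omega idx u i t x {k, l} = omega_coeff idx u i k l t x"
  unfolding Omega_def omega_coeff_def alpha_coeff_def
  by (rule dform_one_form(2)) (auto simp: alpha1_def)

lemma omega_coeff_antisym: "omega_coeff idx u i l k t x = - omega_coeff idx u i k l t x"
  by (simp add: omega_coeff_def)

lemmas iprod_Omega = iprod_two_form[where \<Theta>="Omega idx u i" and W="omega_coeff idx u i",
    OF Omega_two_form Omega_pair omega_coeff_antisym] for i

end

(* The dx_l-coefficient of d/dt alpha_i + i_u Omega_i; (d/dt + L_u) Omega_i is its exterior derivative. *)

definition transport_coeff :: "(nat \<Rightarrow> 'n::finite) \<Rightarrow> (real \<Rightarrow> real^'n \<Rightarrow> real^'n) \<Rightarrow> nat \<Rightarrow> nat \<Rightarrow> 'n sfield" where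
  "transport_coeff idx u i l t x =
     pdt (alpha_coeff idx u i l) t x + (\<Sum>j\<in>{1..CARD('n)}. ucomp idx u j t x * omega_coeff idx u i j l t x)"

definition pressure_grad :: "(nat \<Rightarrow> 'n::finite) \<Rightarrow> (real \<Rightarrow> real) \<Rightarrow> 'n sfield \<Rightarrow> nat \<Rightarrow> 'n sfield" where
  "pressure_grad idx p \<rho> l t x = pdx idx l (\<lambda>t x. p (\<rho> t x)) t x / \<rho> t x"

locale barotropic_schur_flow =
  fixes idx :: "nat \<Rightarrow> 'n::finite" and T :: "real set" and u :: "real \<Rightarrow> real^'n \<Rightarrow> real^'n"
    and \<rho> :: "real \<Rightarrow> real^'n \<Rightarrow> real" and p :: "real \<Rightarrow> real"
  assumes T_open: "open T"
    and u_smooth: "\<forall>j\<in>{1..CARD('n)}. smooth_tx idx T (ucomp idx u j)"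
    and rho_smooth: "smooth_tx idx T \<rho>"
    and rho_pos: "\<forall>t\<in>T. \<forall>x. \<rho> t x > 0"
    and p_smooth: "smooth_pos p"
    and momentum: "\<forall>t\<in>T. \<forall>x. \<forall>j\<in>{1..CARD('n)}.
        pdt (ucomp idx u j) t x
        + (\<Sum>k\<in>{1..CARD('n)}. ucomp idx u k t x * pdx idx k (ucomp idx u j) t x)
        = - pdx idx j (\<lambda>t' x'. p (\<rho> t' x')) t x / \<rho> t x"
    and schur: "\<forall>t\<in>T. \<forall>x. \<forall>k\<in>{1..CARD('n)}. \<forall>j\<in>{1..CARD('n)}.
        (k + 1) div 2 > (j + 1) div 2 \<longrightarrow> pdx idx k (ucomp idx u j) t x = 0"
begin

lemma ucomp_smooth: "smooth_tx idx T (ucomp idx u j)"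
  using u_smooth by (cases "j \<in> {1..CARD('n)}") (auto simp: ucomp_out smooth_tx_zero)

lemma alpha_coeff_smooth: "smooth_tx idx T (alpha_coeff idx u i l)"
  by (simp add: alpha_coeff_eq ucomp_smooth smooth_tx_zero)

lemma has_pdx_ucomp: "t \<in> T \<Longrightarrow> has_pdx idx k (ucomp idx u j) t x"
  by (rule smooth_tx_has_pdx[OF ucomp_smooth])

lemma pressure_grad_eq:
  assumes "t \<in> T"
  shows "pressure_grad idx p \<rho> l t x = deriv p (\<rho> t x) / \<rho> t x * pdx idx l \<rho> t x"
proof -
  have "p field_differentiable at (\<rho> t x)"
    using p_smooth rho_pos assms unfolding smooth_pos_def by (metis funpow_0)
  then show ?thesis
    unfolding pressure_grad_def
    by (simp add: pdx_chain(1)[OF _ smooth_tx_has_pdx[OF rho_smooth assms]])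
qed

lemma enthalpy_differentiable:
  assumes "t \<in> T"
  shows "(\<lambda>r. deriv p r / r) field_differentiable at (\<rho> t x)"
proof -
  have "deriv p field_differentiable at (\<rho> t x)"
    using spec[OF p_smooth[unfolded smooth_pos_def], of 1] rho_pos assms by simp
  moreover have "\<rho> t x \<noteq> 0"
    using rho_pos assms by (metis less_irrefl)
  ultimately show ?thesis
    by (intro field_differentiable_divide field_differentiable_ident)
qed

lemma pdx_pressure_grad_sym:
  assumes t: "t \<in> T"
  shows "pdx idx k (pressure_grad idx p \<rho> l) t x = pdx idx l (pressure_grad idx p \<rho> k) t x"
proof -
  define q where "q r = deriv p r / r" for r
  have q: "q field_differentiable at (\<rho> t y)" for y
    unfolding q_def[abs_def] by (rule enthalpy_differentiable[OF t])
  have "pdx idx k (pressure_grad idx p \<rho> l) t x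
      = deriv q (\<rho> t x) * pdx idx k \<rho> t x * pdx idx l \<rho> t x + q (\<rho> t x) * pdx idx k (pdx idx l \<rho>) t x"
    for k l
  proof -
    have "pdx idx k (pressure_grad idx p \<rho> l) t x = pdx idx k (\<lambda>t y. q (\<rho> t y) * pdx idx l \<rho> t y) t x"
      using t by (intro pdx_cong) (simp add: pressure_grad_eq q_def)
    also have "\<dots> = pdx idx k (\<lambda>t y. q (\<rho> t y)) t x * pdx idx l \<rho> t x + q (\<rho> t x) * pdx idx k (pdx idx l \<rho>) t x"
      using pdx_chain(2)[OF q smooth_tx_has_pdx[OF rho_smooth t]] t
      by (simp add: smooth_tx_has_pdx[where T=T] smooth_tx_pdx rho_smooth)
    finally show ?thesis
      by (simp add: pdx_chain(1)[OF q smooth_tx_has_pdx[OF rho_smooth t]])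
  qed
  then show ?thesis
    using pdx_commute[OF rho_smooth T_open t, of k l] by simp
qed

lemma pressure_grad_momentum:
  assumes "t \<in> T" "l \<in> {1..CARD('n)}"
  shows "pressure_grad idx p \<rho> l t y
       = - pdt (ucomp idx u l) t y - (\<Sum>m\<in>{1..CARD('n)}. ucomp idx u m t y * pdx idx m (ucomp idx u l) t y)"
proof -
  have "pdx idx l (\<lambda>t x. p (\<rho> t x)) t y / \<rho> t y
      = - (pdt (ucomp idx u l) t y + (\<Sum>m\<in>{1..CARD('n)}. ucomp idx u m t y * pdx idx m (ucomp idx u l) t y))"
    using momentum[rule_format, OF assms, of y] by (simp only: minus_divide_left minus_minus)
  then show ?thesis
    unfolding pressure_grad_def by simp
qed

lemma pdx_pressure_grad_schur:
  assumes t: "t \<in> T" and k: "k \<in> {1..CARD('n)}" and l: "l \<in> {1..CARD('n)}"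
    and kl: "(l + 1) div 2 < (k + 1) div 2"
  shows "pdx idx k (pressure_grad idx p \<rho> l) t x = 0"
proof -
  let ?D = "{1..CARD('n)}"
  have schur_kl: "pdx idx k (ucomp idx u l) s y = 0" if "s \<in> T" for s y
    using schur that k l kl by auto
  have "pdx idx k (pressure_grad idx p \<rho> l) t x
      = pdx idx k (\<lambda>t y. - pdt (ucomp idx u l) t y
          - (\<Sum>m\<in>?D. ucomp idx u m t y * pdx idx m (ucomp idx u l) t y)) t x"
    using t l by (intro pdx_cong) (simp add: pressure_grad_momentum)
  also have "\<dots> = - pdx idx k (pdt (ucomp idx u l)) t x
      - (\<Sum>m\<in>?D. pdx idx k (ucomp idx u m) t x * pdx idx m (ucomp idx u l) t x
          + ucomp idx u m t x * pdx idx k (pdx idx m (ucomp idx u l)) t x)"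
    using t by (simp add: smooth_tx_has_pdx[where T=T] smooth_tx_pdx smooth_tx_pdt ucomp_smooth)
  also have "\<dots> = 0"
  proof -
    have "pdx idx k (pdt (ucomp idx u l)) t x = 0"
      using pdt_pdx_commute[OF ucomp_smooth T_open t] pdt_cong[OF T_open t, of "pdx idx k (ucomp idx u l)" x "\<lambda>t x. 0"]
      by (simp add: schur_kl)
    moreover have "pdx idx k (pdx idx m (ucomp idx u l)) t x = 0" for m
    proof -
      have "pdx idx k (pdx idx m (ucomp idx u l)) t x = pdx idx m (pdx idx k (ucomp idx u l)) t x"
        by (rule pdx_commute[OF ucomp_smooth T_open t])
      also have "\<dots> = 0"
        by (rule pdx_zero) (rule schur_kl[OF t])
      finally show ?thesis .
    qed
    moreover have "(\<Sum>m\<in>?D. pdx idx k (ucomp idx u m) t x * pdx idx m (ucomp idx u l) t x) = 0"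
    proof (intro sum.neutral ballI)
      fix m assume "m \<in> ?D"
      then show "pdx idx k (ucomp idx u m) t x * pdx idx m (ucomp idx u l) t x = 0"
        using schur t k l kl by (cases "(m + 1) div 2 < (k + 1) div 2") auto
    qed
    ultimately show ?thesis by simp
  qed
  finally show ?thesis .
qed


lemma has_pdx_pressure_grad:
  assumes t: "t \<in> T"
  shows "has_pdx idx k (pressure_grad idx p \<rho> l) t x"
proof -
  have "has_pdx idx k (\<lambda>t y. deriv p (\<rho> t y) / \<rho> t y * pdx idx l \<rho> t y) t x"
    by (rule has_pdx_mult[OF pdx_chain(2)[OF enthalpy_differentiable[OF t] smooth_tx_has_pdx[OF rho_smooth t]]
          smooth_tx_has_pdx[OF smooth_tx_pdx[OF rho_smooth] t]])
  then show ?thesis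
    using t by (subst has_pdx_cong[where g="\<lambda>t y. deriv p (\<rho> t y) / \<rho> t y * pdx idx l \<rho> t y"])
      (simp_all add: pressure_grad_eq)
qed

lemma pdx_block_pressure_sym:
  assumes t: "t \<in> T" and k: "k \<in> {1..CARD('n)}" and l: "l \<in> {1..CARD('n)}"
  shows "(if (l + 1) div 2 = i then pdx idx k (pressure_grad idx p \<rho> l) t x else 0)
       = (if (k + 1) div 2 = i then pdx idx l (pressure_grad idx p \<rho> k) t x else 0)"
  using pdx_pressure_grad_sym[OF t, of k l] pdx_pressure_grad_schur[OF t k l]
    pdx_pressure_grad_schur[OF t l k]
  by (cases "(l + 1) div 2 < (k + 1) div 2"; cases "(k + 1) div 2 < (l + 1) div 2") auto

lemma transport_coeff_eq:
  assumes t: "t \<in> T"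
  shows "transport_coeff idx u i l t y
       = - (if (l + 1) div 2 = i then pressure_grad idx p \<rho> l t y else 0)
         - (\<Sum>j\<in>{1..CARD('n)}. ucomp idx u j t y * pdx idx l (alpha_coeff idx u i j) t y)"
proof -
  let ?D = "{1..CARD('n)}"
  have split: "transport_coeff idx u i l t y
      = (pdt (alpha_coeff idx u i l) t y + (\<Sum>j\<in>?D. ucomp idx u j t y * pdx idx j (alpha_coeff idx u i l) t y))
        - (\<Sum>j\<in>?D. ucomp idx u j t y * pdx idx l (alpha_coeff idx u i j) t y)"
    by (simp add: transport_coeff_def omega_coeff_def algebra_simps sum_subtractf)
  show ?thesis
  proof (cases "(l + 1) div 2 = i \<and> l \<in> ?D")
    case True
    then show ?thesis
      unfolding split using pressure_grad_momentum[OF t, of l y] by (simp add: alpha_coeff_eq)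
  next
    case False
    then have "alpha_coeff idx u i l = (\<lambda>t x. 0)"
      "(if (l + 1) div 2 = i then pressure_grad idx p \<rho> l t y else 0) = 0"
      by (auto simp: alpha_coeff_eq ucomp_out pressure_grad_def pdx_out)
    then show ?thesis
      unfolding split by simp
  qed
qed

lemma pdx_transport_coeff:
  assumes t: "t \<in> T"
  shows "pdx idx k (transport_coeff idx u i l) t x
       = - (if (l + 1) div 2 = i then pdx idx k (pressure_grad idx p \<rho> l) t x else 0)
         - (\<Sum>j\<in>{1..CARD('n)}. pdx idx k (ucomp idx u j) t x * pdx idx l (alpha_coeff idx u i j) t x
              + ucomp idx u j t x * pdx idx k (pdx idx l (alpha_coeff idx u i j)) t x)"
proof -
  let ?S = "\<lambda>t y. \<Sum>j\<in>{1..CARD('n)}. ucomp idx u j t y * pdx idx l (alpha_coeff idx u i j) t y"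
  have "pdx idx k (transport_coeff idx u i l) t x
      = pdx idx k (\<lambda>t y. - (if (l + 1) div 2 = i then pressure_grad idx p \<rho> l t y else 0) - ?S t y) t x"
    using t by (intro pdx_cong) (simp add: transport_coeff_eq)
  also have "\<dots> = - (if (l + 1) div 2 = i then pdx idx k (pressure_grad idx p \<rho> l) t x else 0)
      - pdx idx k ?S t x"
    using t by (cases "(l + 1) div 2 = i")
      (simp_all add: has_pdx_pressure_grad has_pdx_ucomp smooth_tx_has_pdx[where T=T] smooth_tx_pdx
        alpha_coeff_smooth)
  finally show ?thesis
    using t by (simp add: has_pdx_ucomp smooth_tx_has_pdx[where T=T] smooth_tx_pdx alpha_coeff_smooth)
qed

lemma pdx_transport_coeff_sym:
  assumes t: "t \<in> T" and k: "k \<in> {1..CARD('n)}" and l: "l \<in> {1..CARD('n)}"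
  shows "pdx idx k (transport_coeff idx u i l) t x = pdx idx l (transport_coeff idx u i k) t x"
proof -
  have "pdx idx k (ucomp idx u j) t x * pdx idx l (alpha_coeff idx u i j) t x
      = pdx idx l (ucomp idx u j) t x * pdx idx k (alpha_coeff idx u i j) t x" for j
    by (simp add: alpha_coeff_eq)
  moreover have "pdx idx k (pdx idx l (alpha_coeff idx u i j)) t x = pdx idx l (pdx idx k (alpha_coeff idx u i j)) t x"
    for j by (rule pdx_commute[OF alpha_coeff_smooth T_open t])
  ultimately show ?thesis
    unfolding pdx_transport_coeff[OF t] pdx_block_pressure_sym[OF t k l] by simp
qed

lemma Omega_component_frozen:
  assumes t: "t \<in> T" and k: "k \<in> {1..CARD('n)}" and l: "l \<in> {1..CARD('n)}"
  shows "pdt (omega_coeff idx u i k l) t x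
       + (pdx idx k (\<lambda>t x. iprod idx u (Omega idx u i) t x {l}) t x
          - pdx idx l (\<lambda>t x. iprod idx u (Omega idx u i) t x {k}) t x) = 0"
proof -
  have smooth: "smooth_tx idx T (pdx idx k' (alpha_coeff idx u i m))" for k' m
    by (simp add: smooth_tx_pdx alpha_coeff_smooth)
  have "pdt (omega_coeff idx u i k l) t x
      = pdx idx k (pdt (alpha_coeff idx u i l)) t x - pdx idx l (pdt (alpha_coeff idx u i k)) t x"
    using t by (simp add: omega_coeff_def[abs_def] smooth_tx_has_pdt[OF smooth]
        pdt_pdx_commute[OF alpha_coeff_smooth T_open])
  moreover have transport: "pdx idx k' (transport_coeff idx u i m) t x
      = pdx idx k' (pdt (alpha_coeff idx u i m)) t x + pdx idx k' (\<lambda>t x. iprod idx u (Omega idx u i) t x {m}) t x"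
    for k' m
    using t by (simp add: transport_coeff_def[abs_def] iprod_Omega(2) omega_coeff_def has_pdx_ucomp
        smooth_tx_has_pdx[OF smooth] smooth_tx_has_pdx[OF smooth_tx_pdt[OF alpha_coeff_smooth]])
  ultimately show ?thesis
    using pdx_transport_coeff_sym[OF t k l, of i x] transport[of k l] transport[of l k] by linarith
qed


lemma omega_coeff_cyclic:
  assumes t: "t \<in> T"
  shows "pdx idx a (omega_coeff idx u i b c) t x - pdx idx b (omega_coeff idx u i a c) t x
       + pdx idx c (omega_coeff idx u i a b) t x = 0"
  using pdx_commute[OF alpha_coeff_smooth T_open t, of a b i c] pdx_commute[OF alpha_coeff_smooth T_open t, of a c i b]
    pdx_commute[OF alpha_coeff_smooth T_open t, of b c i a]
  by (simp add: omega_coeff_def[abs_def] smooth_tx_has_pdx[OF smooth_tx_pdx[OF alpha_coeff_smooth] t])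

lemma dform_Omega: "t \<in> T \<Longrightarrow> dform idx (Omega idx u i) t x S = 0"
  by (rule dform_two_form_closed[where W="omega_coeff idx u i"])
    (simp_all add: Omega_two_form Omega_pair omega_coeff_cyclic)

lemma differentiable_form_Omega: "differentiable_form idx T (Omega idx u i)"
  unfolding differentiable_form_def
proof (intro ballI allI conjI)
  fix t x A k assume t: "t \<in> T"
  have "has_pdx idx k (\<lambda>t x. Omega idx u i t x A) t x \<and> has_pdt (\<lambda>t x. Omega idx u i t x A) t x"
  proof (cases "card A = 2")
    case True
    then obtain a b where ab: "a < b" "A = {a, b}" by (rule card_2_sorted)
    have smooth: "smooth_tx idx T (pdx idx k' (alpha_coeff idx u i m))" for k' m
      by (simp add: smooth_tx_pdx alpha_coeff_smooth)
    show ?thesis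
      using t ab by (simp add: Omega_pair omega_coeff_def smooth_tx_has_pdx[OF smooth] smooth_tx_has_pdt[OF smooth])
  qed (simp add: Omega_two_form)
  then show "has_pdx idx k (\<lambda>t x. Omega idx u i t x A) t x" "has_pdt (\<lambda>t x. Omega idx u i t x A) t x"
    by simp_all
qed

lemma lie_invariant_Omega: "lie_invariant idx T u (Omega idx u i)"
  unfolding lie_invariant_def
proof (intro ballI allI impI)
  fix t x S assume t: "t \<in> T" and S: "S \<subseteq> {1..CARD('n)}"
  have closed: "iprod idx u (dform idx (Omega idx u i)) t x S = 0"
    unfolding iprod_def by (simp add: dform_Omega t)
  show "pdt (\<lambda>t x. Omega idx u i t x S) t x + lie idx u (Omega idx u i) t x S = 0"
  proof (cases "card S = 2")
    case False
    then show ?thesis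
      by (simp add: lie_def closed Omega_two_form dform_one_form(1)[OF iprod_Omega(1)])
  next
    case True
    then obtain k l where kl: "k < l" "S = {k, l}" by (rule card_2_sorted)
    have "lie idx u (Omega idx u i) t x S
        = pdx idx k (\<lambda>t x. iprod idx u (Omega idx u i) t x {l}) t x
          - pdx idx l (\<lambda>t x. iprod idx u (Omega idx u i) t x {k}) t x"
      unfolding lie_def closed unfolding kl(2)
      by (simp, rule dform_one_form(2)) (simp_all add: iprod_Omega(1) kl(1))
    moreover have "(\<lambda>t x. Omega idx u i t x S) = omega_coeff idx u i k l"
      by (simp add: kl Omega_pair fun_eq_iff)
    ultimately show ?thesis
      using Omega_component_frozen[OF t, of k l] S kl by simp
  qed
qed

end

theorem corollary1:
  fixes idx :: "nat \<Rightarrow> 'n::finite"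
    and T :: "real set"
    and u :: "real \<Rightarrow> real^'n \<Rightarrow> real^'n"
    and \<rho> :: "real \<Rightarrow> real^'n \<Rightarrow> real"
    and p :: "real \<Rightarrow> real"
    and \<Theta> :: "'n tform"
  assumes dim: "CARD('n) \<ge> 3"
    and coords: "bij_betw idx {1..CARD('n)} (UNIV :: 'n set)"
    and T_open: "open T"
    and u_smooth: "\<forall>j\<in>{1..CARD('n)}. smooth_tx idx T (ucomp idx u j)"
    and rho_smooth: "smooth_tx idx T \<rho>"
    and rho_pos: "\<forall>t\<in>T. \<forall>x. \<rho> t x > 0"
    and p_smooth: "smooth_pos p"
    and momentum: "\<forall>t\<in>T. \<forall>x. \<forall>j\<in>{1..CARD('n)}.
        pdt (ucomp idx u j) t x
        + (\<Sum>k\<in>{1..CARD('n)}. ucomp idx u k t x * pdx idx k (ucomp idx u j) t x)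
        = - pdx idx j (\<lambda>t' x'. p (\<rho> t' x')) t x / \<rho> t x"
    and mass: "\<forall>t\<in>T. \<forall>x.
        pdt \<rho> t x
        + (\<Sum>k\<in>{1..CARD('n)}. pdx idx k (\<lambda>t' x'. \<rho> t' x' * ucomp idx u k t' x') t x) = 0"
    and schur: "\<forall>t\<in>T. \<forall>x. \<forall>k\<in>{1..CARD('n)}. \<forall>j\<in>{1..CARD('n)}.
        (k + 1) div 2 > (j + 1) div 2 \<longrightarrow> pdx idx k (ucomp idx u j) t x = 0"
    and gen: "\<Theta> \<in> gen_forms idx u ((CARD('n) + 1) div 2)"
  shows "lie_invariant idx T u \<Theta>"
proof -
  interpret barotropic_schur_flow idx T u \<rho> p
    using T_open u_smooth rho_smooth rho_pos p_smooth momentum schur by unfold_locales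
  have u: "\<forall>t\<in>T. \<forall>x j k. has_pdx idx k (ucomp idx u j) t x"
    by (simp add: has_pdx_ucomp)
  from gen have "differentiable_form idx T \<Theta> \<and> lie_invariant idx T u \<Theta>"
  proof (induction rule: gen_forms.induct)
    case (base i)
    show ?case by (simp add: differentiable_form_Omega lie_invariant_Omega)
  next
    case (scale \<Theta> c)
    then show ?case by (simp add: differentiable_form_scale lie_invariant_scale[OF u])
  next
    case (add \<Theta>1 \<Theta>2)
    then show ?case by (simp add: differentiable_form_add lie_invariant_add[OF u])
  next
    case (wedge \<Theta>1 \<Theta>2)
    then show ?case by (simp add: differentiable_form_wedge lie_invariant_wedge[OF u])
  qed
  then show ?thesis ..
qed

end
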